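(* Let $k$ be a positive integer, $a=12k+2$, $S=\{a,a+2,a+\tfrac a2\}$, $G=\langle S\rangle$. Let $A_{0,k}=\{0\}$ and, for $i\in[1,3k]$, $A_{i,k}=[ia,\,ia+2i]_2$ and $B_{i,k}=A_{i-1,k}+\{a+\tfrac a2\}$. For $i\in[3k+1,6k]$ let $D_{i,k}=[ia+\tfrac a2,\,ia+\tfrac a2+2(i-3k)]\cup[ia+\tfrac a2+2(i-3k+1),\,ia+\tfrac a2+6k]_2$. Let $C_{3k+1,k}=[(3k+1)a,(3k+1)a+6k]_2$, $C_{3k+2,k}=[(3k+2)a,(3k+2)a+6k]_2$, and $C_{i,k}=D_{i-2,k}+\{a+\tfrac a2\}$ for $i\in[3k+3,6k+1]$. Let $E=[(6k+1)a+\tfrac a2,\infty[$ and $H_{8,k}=A_{0,k}\cup\bigcup_{i=1}^{3k}(A_{i,k}\cup B_{i,k})\cup\bigcup_{i=3k+1}^{6k+1}C_{i,k}\cup\bigcup_{i=3k+1}^{6k}D_{i,k}\cup E$. Then: (1) $x\in G$ if and only if $x=qa+2r+s(a+\tfrac a2)$ for some $q,r,s\in\mathbb{N}$ with $0\le r\le q$; (2) $G=H_{8,k}$; (3) $A_{i,k}<B_{i,k}$ for $i\in[1,3k]$; $B_{i,k}<A_{i+1,k}$ for $i\in[1,3k-1]$; $B_{3k,k}<C_{3k+1,k}$; $C_{i,k}<D_{i,k}$ for $i\in[3k+1,6k]$; $D_{i,k}<C_{i+1,k}$ for $i\in[3k+1,6k]$; $C_{6k+1,k}<E$; (4) $H_{8,k}$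 is a $3$-permutation numerical semigroup.
   Context: $\mathbb{N}=\{0,1,2,\dots\}$. A numerical semigroup is a submonoid $G$ of $(\mathbb{N},+,0)$ with $\mathbb{N}\setminus G$ finite; $\langle S\rangle$ is the submonoid generated by $S$. Writing the elements of a numerical semigroup as $0=g_0<g_1<g_2<\cdots$, it is an $n$-permutation numerical semigroup if it is generated by $\{g_1,\dots,g_n\}$ and for every $k\in\mathbb{N}$ the tuple $(g_{kn+1}\bmod n,\dots,g_{kn+n}\bmod n)$ contains exactly one representative of each residue class mod $n$. Notation: $[u,v]=\{x\in\mathbb{N}:u\le x\le v\}$, $[u,v]_2=\{x\in[u,v]:x\equiv u\pmod 2\}$, $[u,\infty[=\{x\in\mathbb{N}:x\ge u\}$; $X+Y=\{x+y:x\in X,y\in Y\}$; for nonempty $X,Y$, $X<Y$ means $x<y$ for all $x\in X,y\in Y$. *)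

theory Defs
  imports Main "HOL-Library.Infinite_Set"
begin

inductive_set monoid_gen :: "nat set \<Rightarrow> nat set" for S :: "nat set" where
  gen_zero: "0 \<in> monoid_gen S"
| gen_base: "x \<in> S \<Longrightarrow> x \<in> monoid_gen S"
| gen_add: "x \<in> monoid_gen S \<Longrightarrow> y \<in> monoid_gen S \<Longrightarrow> x + y \<in> monoid_gen S"

definition numerical_semigroup :: "nat set \<Rightarrow> bool" where
  "numerical_semigroup G \<longleftrightarrow>
     0 \<in> G \<and> (\<forall>x\<in>G. \<forall>y\<in>G. x + y \<in> G) \<and> finite (UNIV - G)"

text \<open>The elements of G in increasing order: g_i = enumerate G i (g_0 = 0).\<close>
definition perm_numerical_semigroup :: "nat \<Rightarrow> nat set \<Rightarrow> bool" where
  "perm_numerical_semigroup n G \<longleftrightarrow>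
     numerical_semigroup G \<and>
     G = monoid_gen (enumerate G ` {1..n}) \<and>
     (\<forall>k::nat. bij_betw (\<lambda>j. enumerate G (k * n + j) mod n) {1..n} {..<n})"

definition intv :: "nat \<Rightarrow> nat \<Rightarrow> nat set" where
  "intv u v = {x. u \<le> x \<and> x \<le> v}"

definition intv2 :: "nat \<Rightarrow> nat \<Rightarrow> nat set" where
  "intv2 u v = {x. u \<le> x \<and> x \<le> v \<and> x mod 2 = u mod 2}"

definition from_on :: "nat \<Rightarrow> nat set" where
  "from_on u = {x. u \<le> x}"

definition setplus :: "nat set \<Rightarrow> nat set \<Rightarrow> nat set" where
  "setplus X Y = {x + y | x y. x \<in> X \<and> y \<in> Y}"

definition setless :: "nat set \<Rightarrow> nat set \<Rightarrow> bool" where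
  "setless X Y \<longleftrightarrow> (\<forall>x\<in>X. \<forall>y\<in>Y. x < y)"

definition aa :: "nat \<Rightarrow> nat" where "aa k = 12 * k + 2"

definition Aset :: "nat \<Rightarrow> nat \<Rightarrow> nat set" where
  "Aset k i = (if i = 0 then {0} else intv2 (i * aa k) (i * aa k + 2 * i))"

definition Bset :: "nat \<Rightarrow> nat \<Rightarrow> nat set" where
  "Bset k i = setplus (Aset k (i - 1)) {aa k + aa k div 2}"

definition Dset :: "nat \<Rightarrow> nat \<Rightarrow> nat set" where
  "Dset k i = intv (i * aa k + aa k div 2) (i * aa k + aa k div 2 + 2 * (i - 3 * k))
     \<union> intv2 (i * aa k + aa k div 2 + 2 * (i - 3 * k + 1)) (i * aa k + aa k div 2 + 6 * k)"

definition Cset :: "nat \<Rightarrow> nat \<Rightarrow> nat set" where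
  "Cset k i = (if i = 3 * k + 1 then intv2 ((3 * k + 1) * aa k) ((3 * k + 1) * aa k + 6 * k)
     else if i = 3 * k + 2 then intv2 ((3 * k + 2) * aa k) ((3 * k + 2) * aa k + 6 * k)
     else setplus (Dset k (i - 2)) {aa k + aa k div 2})"

definition Eset :: "nat \<Rightarrow> nat set" where
  "Eset k = from_on ((6 * k + 1) * aa k + aa k div 2)"

definition H8 :: "nat \<Rightarrow> nat set" where
  "H8 k = Aset k 0 \<union> (\<Union>i\<in>{1..3*k}. Aset k i \<union> Bset k i)
     \<union> (\<Union>i\<in>{3*k+1..6*k+1}. Cset k i) \<union> (\<Union>i\<in>{3*k+1..6*k}. Dset k i) \<union> Eset k"

end

theory Submission
  imports Defs
begin

text \<open>
  Write \<open>a = 12k + 2\<close> and \<open>h = a/2 = 6k + 1\<close>. Since \<open>2 (a + h) = 3 a\<close>, every element of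
  \<open>G = \<langle>a, a + 2, a + h\<rangle>\<close> is \<open>q a + 2 r + e (a + h)\<close> with \<open>r \<le> q\<close> and \<open>e \<le> 1\<close>. Cutting
  \<open>\<nat>\<close> into rows \<open>[i a, (i + 1) a[\<close>, the elements with \<open>e = 0\<close> form the sets \<open>A_i\<close> and those with
  \<open>e = 1\<close> the sets \<open>B_i\<close>; from row \<open>3k + 1\<close> on the two families overlap and produce the blocks
  \<open>C_i\<close>, \<open>D_i\<close> and the tail \<open>E\<close>, so \<open>G = H8 k\<close> and the blocks appear in the stated order.

  For the permutation property, the successor of every element of \<open>H8 k\<close> and its position in
  the increasing enumeration are given by explicit formulas (row \<open>i \<le> 3k\<close> starts at position
  \<open>i\<^sup>2\<close>). As \<open>a \<equiv> 2\<close> and \<open>h \<equiv> 1\<close> modulo 3, a block of three consecutive elements has distinct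
  residues when its two steps are both \<open>1\<close> or both \<open>2\<close>; the position formulas show that the
  remaining steps, between the runs, only occur where a block starts or ends, or next to a step
  with which they are still compatible.
\<close>

lemma monoid_gen_mult: "x \<in> S \<Longrightarrow> n * x \<in> monoid_gen S"
  by (induction n) (auto intro: monoid_gen.intros)

lemma mem_monoid_gen_iff:
  "x \<in> monoid_gen {a, a + 2, c} \<longleftrightarrow> (\<exists>q r s. r \<le> q \<and> x = q * a + 2 * r + s * c)"
proof
  assume "x \<in> monoid_gen {a, a + 2, c}"
  then show "\<exists>q r s. r \<le> q \<and> x = q * a + 2 * r + s * c"
  proof (induction rule: monoid_gen.induct)
    case gen_zero
    show ?case by (intro exI[of _ 0]) simp
  next
    case (gen_base x)
    have "a = 1 * a + 2 * 0 + 0 * c" "a + 2 = 1 * a + 2 * 1 + 0 * c" "c = 0 * a + 2 * 0 + 1 * c"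
      by simp_all
    with gen_base show ?case
      by (metis (no_types) empty_iff insertE le_refl zero_le)
  next
    case (gen_add x y)
    then obtain q r s q' r' s' where
      "r \<le> q" "x = q * a + 2 * r + s * c" "r' \<le> q'" "y = q' * a + 2 * r' + s' * c"
      by blast
    then show ?case
      by (intro exI[of _ "q + q'"] exI[of _ "r + r'"] exI[of _ "s + s'"]) (simp add: algebra_simps)
  qed
next
  assume "\<exists>q r s. r \<le> q \<and> x = q * a + 2 * r + s * c"
  then obtain q r s where "r \<le> q" "x = q * a + 2 * r + s * c"
    by blast
  then have "x = (q - r) * a + r * (a + 2) + s * c"
    by (simp add: algebra_simps diff_mult_distrib)
  then show "x \<in> monoid_gen {a, a + 2, c}"
    by (metis monoid_gen.gen_add monoid_gen_mult insertI1 insertI2)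
qed

lemma aa_div_2 [simp]: "aa k div 2 = 6 * k + 1"
  by (simp add: aa_def)

lemma aa_pos: "0 < aa k"
  by (simp add: aa_def)

definition G8 :: "nat \<Rightarrow> nat set" where
  "G8 k = monoid_gen {aa k, aa k + 2, aa k + aa k div 2}"

lemma G8_intro: "r \<le> q \<Longrightarrow> x = q * aa k + 2 * r + s * (aa k + (6 * k + 1)) \<Longrightarrow> x \<in> G8 k"
  unfolding G8_def mem_monoid_gen_iff by auto

lemma G8_add_third: "y \<in> G8 k \<Longrightarrow> y + (aa k + (6 * k + 1)) \<in> G8 k"
  unfolding G8_def by (metis aa_div_2 insertI1 insertI2 monoid_gen.gen_add monoid_gen.gen_base)

text \<open>Since \<open>2 (a + a/2) = 3 a\<close>, the third generator is needed at most once.\<close>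

lemma G8_normal_form:
  assumes "x \<in> G8 k"
  obtains q r e where "r \<le> q" "e \<le> 1" "x = q * aa k + 2 * r + e * (aa k + (6 * k + 1))"
proof -
  from assms obtain q r s where qr: "r \<le> q" and x: "x = q * aa k + 2 * r + s * (aa k + (6 * k + 1))"
    unfolding G8_def mem_monoid_gen_iff by auto
  define e m where "e = s mod 2" and "m = s div 2"
  then have s: "s = e + 2 * m" and "e \<le> 1"
    by simp_all
  then have "x = (q + 3 * m) * aa k + 2 * r + e * (aa k + (6 * k + 1))"
    unfolding x s aa_def by (simp add: algebra_simps)
  with qr \<open>e \<le> 1\<close> show thesis
    by (intro that[of r "q + 3 * m"]) auto
qed

text \<open>Every number is \<open>i a + t\<close> with \<open>t < a\<close>; \<open>row_has k i t\<close> says that this number lies in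
  \<open>H8 k\<close>. For \<open>i \<le> 3k\<close> the even offsets form \<open>A_i\<close> and the odd ones \<open>B_i\<close>; for \<open>i > 3k\<close> the
  offsets below \<open>a/2\<close> form \<open>C_i\<close> and the others \<open>D_i\<close>. The last clause also covers \<open>E\<close>,
  since for \<open>i \<ge> 6k + 1\<close> its bounds exceed the offsets occurring in the row.\<close>

definition row_has :: "nat \<Rightarrow> nat \<Rightarrow> nat \<Rightarrow> bool" where
  "row_has k i t \<longleftrightarrow>
    (if i = 0 then t = 0
     else if i \<le> 3 * k then
       (even t \<and> t \<le> 2 * i) \<or> (odd t \<and> 6 * k + 1 \<le> t \<and> t \<le> 6 * k + 1 + 2 * (i - 1))
     else (t < 6 * k + 1 \<longrightarrow> t \<le> 2 * (i - 2 - 3 * k) \<or> (even t \<and> t \<le> 6 * k))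
       \<and> (6 * k + 1 \<le> t \<longrightarrow> t - (6 * k + 1) \<le> 2 * (i - 3 * k) \<or> even (t - (6 * k + 1))))"

definition in_rows :: "nat \<Rightarrow> nat \<Rightarrow> bool" where
  "in_rows k x \<longleftrightarrow> row_has k (x div aa k) (x mod aa k)"

lemma in_rows_iff: "t < aa k \<Longrightarrow> in_rows k (i * aa k + t) \<longleftrightarrow> row_has k i t"
  unfolding in_rows_def by simp

lemma in_rows_intro: "x = i * aa k + t \<Longrightarrow> t < aa k \<Longrightarrow> row_has k i t \<Longrightarrow> in_rows k x"
  by (simp add: in_rows_iff)

lemma row_decomp:
  obtains i t where "x = i * aa k + t" "t < aa k"
  using aa_pos by (metis div_mult_mod_eq mod_less_divisor)

lemma row_index_mono:
  assumes "i * a + t \<le> j * a + s" "s < (a::nat)"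
  shows "i \<le> j"
proof (rule ccontr)
  assume "\<not> i \<le> j"
  then have "Suc j * a \<le> i * a"
    by (intro mult_le_mono1) simp
  with assms show False
    by simp
qed

definition E_start :: "nat \<Rightarrow> nat" where
  "E_start k = (6 * k + 1) * aa k + (6 * k + 1)"

lemma E_start_rowE:
  assumes "E_start k \<le> i * aa k + t" "t < aa k"
  shows "6 * k + 2 \<le> i \<or> (i = 6 * k + 1 \<and> 6 * k + 1 \<le> t)"
proof -
  have "6 * k + 1 \<le> i"
    using row_index_mono[of "6 * k + 1" "aa k" "6 * k + 1" i t] assms by (simp add: E_start_def aa_def)
  moreover have "i = 6 * k + 1 \<Longrightarrow> 6 * k + 1 \<le> t"
    using assms unfolding E_start_def by simp
  ultimately show ?thesis
    by linarith
qed

lemma row_le_of_below_E: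
  assumes "\<not> E_start k \<le> i * aa k + t"
  shows "i \<le> 6 * k + 1"
proof (rule ccontr)
  assume "\<not> i \<le> 6 * k + 1"
  then have "(6 * k + 2) * aa k \<le> i * aa k"
    by (intro mult_le_mono1) simp
  with assms show False
    unfolding E_start_def aa_def by (simp add: algebra_simps)
qed

lemma in_rows_cases:
  assumes "in_rows k x"
  obtains (E) "E_start k \<le> x"
  | (zero) "x = 0"
  | (A) i j where "1 \<le> i" "i \<le> 3 * k" "j \<le> i" "x = i * aa k + 2 * j"
  | (B) i j where "1 \<le> i" "i \<le> 3 * k" "j + 1 \<le> i" "x = i * aa k + (6 * k + 1 + 2 * j)"
  | (C) i t where "3 * k + 1 \<le> i" "i \<le> 6 * k + 1" "t < 6 * k + 1"
      "t \<le> 2 * (i - 2 - 3 * k) \<or> (even t \<and> t \<le> 6 * k)" "x = i * aa k + t"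
  | (D) i u where "3 * k + 1 \<le> i" "i \<le> 6 * k" "u \<le> 6 * k"
      "u \<le> 2 * (i - 3 * k) \<or> even u" "x = i * aa k + (6 * k + 1 + u)"
proof -
  obtain i t where x: "x = i * aa k + t" and t: "t < aa k"
    by (rule row_decomp)
  have row: "row_has k i t"
    using assms x t by (simp add: in_rows_iff)
  consider "E_start k \<le> x" | "i = 0" | "1 \<le> i" "i \<le> 3 * k"
    | "\<not> E_start k \<le> x" "3 * k + 1 \<le> i" "t < 6 * k + 1"
    | "\<not> E_start k \<le> x" "3 * k + 1 \<le> i" "6 * k + 1 \<le> t"
    by linarith
  then show thesis
  proof cases
    case 2
    with row x show thesis
      using zero unfolding row_has_def by simp
  next
    case 3
    with row consider "even t" "t \<le> 2 * i" | "odd t" "6 * k + 1 \<le> t" "t \<le> 6 * k + 1 + 2 * (i - 1)"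
      unfolding row_has_def by auto
    then show thesis
    proof cases
      case 1
      then have "t = 2 * (t div 2)"
        by simp
      with 1 3 x show thesis
        by (intro A[of i "t div 2"]) simp_all
    next
      case 2
      then have "t = 6 * k + 1 + 2 * ((t - (6 * k + 1)) div 2)"
        by presburger
      with 2 3 x show thesis
        by (intro B[of i "(t - (6 * k + 1)) div 2"]) linarith+
    qed
  next
    case 4
    with row x show thesis
      using row_le_of_below_E[of k i t] by (intro C[of i t]) (auto simp: row_has_def)
  next
    case 5
    have "i \<le> 6 * k + 1"
      using 5 x row_le_of_below_E by blast
    moreover have "i \<noteq> 6 * k + 1"
      using 5 x unfolding E_start_def by auto
    ultimately have "i \<le> 6 * k"
      by simp
    moreover have "t - (6 * k + 1) \<le> 6 * k"
      using t by (simp add: aa_def)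
    ultimately show thesis
      using 5 row x by (intro D[of i "t - (6 * k + 1)"]) (auto simp: row_has_def)
  qed (rule E)
qed

lemma in_rows_E:
  assumes "E_start k \<le> x"
  shows "in_rows k x"
proof -
  obtain i t where x: "x = i * aa k + t" "t < aa k"
    by (rule row_decomp)
  with E_start_rowE[of k i t] assms have "row_has k i t"
    unfolding row_has_def aa_def by auto
  with x show ?thesis
    by (simp add: in_rows_iff)
qed

lemma G8_in_rows:
  assumes "x \<in> G8 k"
  shows "in_rows k x"
proof (cases "E_start k \<le> x")
  case True
  then show ?thesis
    by (rule in_rows_E)
next
  case False
  then have x_less: "x < (6 * k + 1) * aa k + (6 * k + 1)"
    unfolding E_start_def by simp
  obtain q r e where qr: "r \<le> q" "e \<le> 1" and x: "x = q * aa k + 2 * r + e * (aa k + (6 * k + 1))"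
    using assms by (rule G8_normal_form)
  have a: "aa k = 12 * k + 2"
    by (simp add: aa_def)
  consider "e = 0" | "e = 1" "2 * r \<le> 6 * k" | "e = 1" "\<not> 2 * r \<le> 6 * k"
    using qr by linarith
  then show ?thesis
  proof cases
    case 1
    then have x0: "x = q * aa k + 2 * r"
      using x by simp
    have "2 * r < aa k"
    proof (rule ccontr)
      assume "\<not> 2 * r < aa k"
      then have "(6 * k + 1) * aa k \<le> q * aa k"
        using qr a by (intro mult_le_mono1) linarith
      then show False
        using x_less x0 \<open>\<not> 2 * r < aa k\<close> a by linarith
    qed
    moreover have "row_has k q (2 * r)"
      unfolding row_has_def using qr by auto
    ultimately show ?thesis
      by (rule in_rows_intro[OF x0])
  next
    case 2
    have "x = (q + 1) * aa k + (6 * k + 1 + 2 * r)"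
      using x 2 by (simp add: algebra_simps)
    moreover have "6 * k + 1 + 2 * r < aa k"
      using 2 a by linarith
    moreover have "row_has k (q + 1) (6 * k + 1 + 2 * r)"
      unfolding row_has_def using qr by auto
    ultimately show ?thesis
      by (rule in_rows_intro)
  next
    case 3
    have x2: "x = (q + 2) * aa k + (2 * r - (6 * k + 1))"
      using x 3 a by (simp add: algebra_simps)
    have "(q + 1) * aa k + (6 * k + 1) + 2 * r < (6 * k + 1) * aa k + (6 * k + 1)"
      using x_less x 3 by (simp add: algebra_simps)
    then have "(q + 1) * aa k < (6 * k + 1) * aa k"
      by linarith
    then have "q + 1 < 6 * k + 1"
      by simp
    then have t_less: "2 * r - (6 * k + 1) < 6 * k + 1"
      using qr by linarith
    moreover have "row_has k (q + 2) (2 * r - (6 * k + 1))"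
      unfolding row_has_def using qr 3 t_less by auto
    ultimately show ?thesis
      using in_rows_intro[OF x2] a by simp
  qed
qed

section \<open>The semigroup equals \<open>H8 k\<close>\<close>

lemma mem_intv_iff: "y \<in> intv u v \<longleftrightarrow> (\<exists>j. y = u + j \<and> u + j \<le> v)"
  unfolding intv_def by (auto intro: exI[of _ "y - u"])

lemma mem_intv2_iff: "y \<in> intv2 u v \<longleftrightarrow> (\<exists>j. y = u + 2 * j \<and> u + 2 * j \<le> v)"
proof
  assume "y \<in> intv2 u v"
  then have y: "u \<le> y" "y \<le> v" "y mod 2 = u mod 2"
    unfolding intv2_def by auto
  then have "y = u + 2 * ((y - u) div 2)"
    by presburger
  with y show "\<exists>j. y = u + 2 * j \<and> u + 2 * j \<le> v"
    by metis
qed (auto simp: intv2_def)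

lemma mem_setplus_singleton_iff: "y \<in> setplus X {c} \<longleftrightarrow> (\<exists>z\<in>X. y = z + c)"
  unfolding setplus_def by auto

lemma setplus_singletonI: "z \<in> X \<Longrightarrow> z + c \<in> setplus X {c}"
  unfolding setplus_def by blast

lemma G8_of_Aset:
  assumes "y \<in> Aset k i"
  shows "y \<in> G8 k"
proof (cases "i = 0")
  case True
  with assms show ?thesis
    unfolding Aset_def by (auto intro: G8_intro[of 0 0])
next
  case False
  with assms obtain j where "y = i * aa k + 2 * j" "j \<le> i"
    by (auto simp: Aset_def mem_intv2_iff)
  then show ?thesis
    by (intro G8_intro[of j i _ _ 0]) simp_all
qed

lemma G8_of_Bset:
  assumes "y \<in> Bset k i"
  shows "y \<in> G8 k"
proof -
  obtain z where "z \<in> Aset k (i - 1)" "y = z + (aa k + (6 * k + 1))"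
    using assms unfolding Bset_def mem_setplus_singleton_iff by auto
  then show ?thesis
    using G8_of_Aset G8_add_third by blast
qed

lemma G8_upper_half_memI:
  assumes "1 \<le> i" "(even u \<and> u \<le> 2 * (i - 1)) \<or> (odd u \<and> 6 * k + 1 + u \<le> 2 * i)"
  shows "i * aa k + (6 * k + 1) + u \<in> G8 k"
  using assms(2)
proof
  assume u: "even u \<and> u \<le> 2 * (i - 1)"
  then obtain m where m: "u = 2 * m"
    by (auto elim: evenE)
  obtain i' where i': "i = Suc i'"
    using assms(1) by (cases i) auto
  show ?thesis
    by (rule G8_intro[of m i' _ _ 1]) (use u m i' in \<open>auto simp: algebra_simps\<close>)
next
  assume u: "odd u \<and> 6 * k + 1 + u \<le> 2 * i"
  then have m: "6 * k + 1 + u = 2 * ((6 * k + 1 + u) div 2)"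
    by presburger
  show ?thesis
    by (rule G8_intro[of "(6 * k + 1 + u) div 2" i _ _ 0]) (use u m in \<open>auto simp: algebra_simps\<close>)
qed

lemma G8_of_Cset_start:
  assumes "y \<in> intv2 (i * aa k) (i * aa k + 6 * k)" "3 * k + 1 \<le> i"
  shows "y \<in> G8 k"
proof -
  obtain j where "y = i * aa k + 2 * j" "j \<le> 3 * k"
    using assms(1) unfolding mem_intv2_iff by auto
  with assms(2) show ?thesis
    by (intro G8_intro[of j i _ _ 0]) simp_all
qed

lemma G8_of_Dset:
  assumes "y \<in> Dset k i" "3 * k + 1 \<le> i" "0 < k"
  shows "y \<in> G8 k"
proof -
  have "\<exists>u. y = i * aa k + (6 * k + 1) + u \<and> (u \<le> 2 * (i - 3 * k) \<or> (even u \<and> u \<le> 6 * k))"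
    using assms(1) unfolding Dset_def aa_div_2 Un_iff mem_intv_iff mem_intv2_iff
  proof (elim disjE exE conjE)
    fix j
    assume "y = i * aa k + (6 * k + 1) + 2 * (i - 3 * k + 1) + 2 * j"
      "i * aa k + (6 * k + 1) + 2 * (i - 3 * k + 1) + 2 * j \<le> i * aa k + (6 * k + 1) + 6 * k"
    then show ?thesis
      by (intro exI[of _ "2 * (i - 3 * k + 1) + 2 * j"]) simp
  qed auto
  then obtain u where y: "y = i * aa k + (6 * k + 1) + u"
    and u: "u \<le> 2 * (i - 3 * k) \<or> (even u \<and> u \<le> 6 * k)"
    by blast
  have "(even u \<and> u \<le> 2 * (i - 1)) \<or> (odd u \<and> 6 * k + 1 + u \<le> 2 * i)"
  proof (cases "even u")
    case True
    with u assms(2,3) show ?thesis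
      by linarith
  next
    case False
    then have "u \<noteq> 2 * (i - 3 * k)"
      by auto
    with u False assms(2) show ?thesis
      by linarith
  qed
  with assms(2) show ?thesis
    unfolding y by (intro G8_upper_half_memI) simp_all
qed

lemma G8_of_E:
  assumes "E_start k \<le> y"
  shows "y \<in> G8 k"
proof -
  obtain i t where y: "y = i * aa k + t" "t < aa k"
    by (rule row_decomp)
  have a: "aa k = 12 * k + 2"
    by (simp add: aa_def)
  have i: "6 * k + 2 \<le> i \<or> (i = 6 * k + 1 \<and> 6 * k + 1 \<le> t)"
    using E_start_rowE assms y by simp
  then have "1 \<le> i"
    by auto
  consider "even t" | "odd t" "6 * k + 1 \<le> t" | "odd t" "t < 6 * k + 1"
    by linarith
  then show ?thesis
  proof cases
    case 1
    then have "t = 2 * (t div 2)"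
      by simp
    then show ?thesis
      using y i a by (intro G8_intro[of "t div 2" i _ _ 0]) linarith+
  next
    case 2
    have y': "y = i * aa k + (6 * k + 1) + (t - (6 * k + 1))"
      using y 2 by simp
    have "even (t - (6 * k + 1)) \<and> t - (6 * k + 1) \<le> 2 * (i - 1)"
      using 2 y(2) i a by presburger
    then show ?thesis
      unfolding y' by (intro G8_upper_half_memI[OF \<open>1 \<le> i\<close>]) blast
  next
    case 3
    with i obtain i' where i': "i = Suc i'" "6 * k + 1 \<le> i'"
      by (cases i) auto
    have y': "y = i' * aa k + (6 * k + 1) + (6 * k + 1 + t)"
      using y i' a by simp
    have "t + 1 \<le> 6 * k"
      using 3 by presburger
    with 3 i' have "even (6 * k + 1 + t) \<and> 6 * k + 1 + t \<le> 2 * (i' - 1)"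
      by simp
    moreover have "1 \<le> i'"
      using i' by simp
    ultimately show ?thesis
      unfolding y' by (intro G8_upper_half_memI) blast+
  qed
qed

lemma Cset_eq:
  "i = 3 * k + 1 \<or> i = 3 * k + 2 \<Longrightarrow> Cset k i = intv2 (i * aa k) (i * aa k + 6 * k)"
  "i \<noteq> 3 * k + 1 \<Longrightarrow> i \<noteq> 3 * k + 2 \<Longrightarrow> Cset k i = setplus (Dset k (i - 2)) {aa k + (6 * k + 1)}"
  unfolding Cset_def by auto

lemma G8_of_Cset:
  assumes "y \<in> Cset k i" "3 * k + 1 \<le> i" "0 < k"
  shows "y \<in> G8 k"
proof (cases "i = 3 * k + 1 \<or> i = 3 * k + 2")
  case True
  with assms show ?thesis
    using Cset_eq(1) G8_of_Cset_start by auto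
next
  case False
  with assms(1) have "y \<in> setplus (Dset k (i - 2)) {aa k + (6 * k + 1)}"
    using Cset_eq(2) by auto
  then obtain z where "z \<in> Dset k (i - 2)" "y = z + (aa k + (6 * k + 1))"
    unfolding mem_setplus_singleton_iff by auto
  moreover have "3 * k + 1 \<le> i - 2"
    using assms(2) False by auto
  ultimately show ?thesis
    using G8_of_Dset[OF _ _ assms(3)] G8_add_third by blast
qed

lemma H8_subset_G8:
  assumes "0 < k"
  shows "H8 k \<subseteq> G8 k"
proof
  fix x
  assume "x \<in> H8 k"
  then show "x \<in> G8 k"
    unfolding H8_def
  proof (elim UnE UN_E)
    fix i
    assume "i \<in> {3 * k + 1..6 * k + 1}" "x \<in> Cset k i"
    then show ?thesis
      using G8_of_Cset assms by simp
  next
    fix i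
    assume "i \<in> {3 * k + 1..6 * k}" "x \<in> Dset k i"
    then show ?thesis
      using G8_of_Dset assms by simp
  next
    assume "x \<in> Eset k"
    then show ?thesis
      unfolding Eset_def from_on_def by (intro G8_of_E) (simp add: E_start_def)
  qed (blast intro: G8_of_Aset G8_of_Bset)+
qed

lemma Aset_memI:
  assumes "1 \<le> i" "even t" "t \<le> 2 * i"
  shows "i * aa k + t \<in> Aset k i"
proof -
  have "i * aa k + t \<in> intv2 (i * aa k) (i * aa k + 2 * i)"
    unfolding mem_intv2_iff using assms(2,3) by (intro exI[of _ "t div 2"]) auto
  with assms(1) show ?thesis
    unfolding Aset_def by simp
qed

lemma Bset_memI:
  assumes "1 \<le> i" "odd t" "6 * k + 1 \<le> t" "t \<le> 6 * k + 1 + 2 * (i - 1)"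
  shows "i * aa k + t \<in> Bset k i"
proof -
  obtain i' where i': "i = Suc i'"
    using assms(1) by (cases i) auto
  have z: "i' * aa k + (t - (6 * k + 1)) \<in> Aset k i'"
  proof (cases "i' = 0")
    case True
    then have "t = 6 * k + 1"
      using assms i' by simp
    with True show ?thesis
      unfolding Aset_def by simp
  next
    case False
    have "even (t - (6 * k + 1))"
      using assms(2,3) by simp
    with False assms(4) i' show ?thesis
      by (intro Aset_memI) simp_all
  qed
  have eq: "i * aa k + t = (i' * aa k + (t - (6 * k + 1))) + (aa k + aa k div 2)"
    using i' assms(3) by simp
  have "Bset k i = setplus (Aset k i') {aa k + aa k div 2}"
    using i' by (simp add: Bset_def)
  then show ?thesis
    using eq z by (simp only:) (rule setplus_singletonI)
qed

lemma Dset_memI: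
  assumes "u \<le> 2 * (i - 3 * k) \<or> (even u \<and> u \<le> 6 * k)"
  shows "i * aa k + (6 * k + 1) + u \<in> Dset k i"
proof (cases "u \<le> 2 * (i - 3 * k)")
  case True
  then show ?thesis
    unfolding Dset_def aa_div_2 Un_iff mem_intv_iff by auto
next
  case False
  with assms have u: "even u" "u \<le> 6 * k"
    by auto
  with False have "2 * (i - 3 * k + 1) \<le> u"
    by (auto elim!: evenE)
  with u have "u = 2 * (i - 3 * k + 1) + 2 * ((u - 2 * (i - 3 * k + 1)) div 2)"
    by (auto elim!: evenE)
  with u \<open>2 * (i - 3 * k + 1) \<le> u\<close> show ?thesis
    unfolding Dset_def aa_div_2 Un_iff mem_intv2_iff
    by (intro disjI2 exI[of _ "(u - 2 * (i - 3 * k + 1)) div 2"]) linarith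
qed

lemma Cset_memI:
  assumes "3 * k + 1 \<le> i" "t < 6 * k + 1" "t \<le> 2 * (i - 2 - 3 * k) \<or> (even t \<and> t \<le> 6 * k)"
  shows "i * aa k + t \<in> Cset k i"
proof (cases "i = 3 * k + 1 \<or> i = 3 * k + 2")
  case True
  then have "even t \<and> t \<le> 6 * k"
    using assms(3) by auto
  then have "i * aa k + t \<in> intv2 (i * aa k) (i * aa k + 6 * k)"
    unfolding mem_intv2_iff by (auto elim!: evenE)
  with True show ?thesis
    using Cset_eq(1) by simp
next
  case False
  define i' where "i' = i - 2"
  have i': "i = i' + 2" "3 * k + 1 \<le> i'"
    using assms(1) False unfolding i'_def by auto
  have "t \<le> 2 * (i' - 3 * k) \<or> (even t \<and> t \<le> 6 * k)"
    using assms(3) i' by simp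
  then have z: "i' * aa k + (6 * k + 1) + t \<in> Dset k i'"
    by (rule Dset_memI)
  have eq: "i * aa k + t = i' * aa k + (6 * k + 1) + t + (aa k + (6 * k + 1))"
    using i' by (simp add: aa_def algebra_simps)
  have "Cset k i = setplus (Dset k i') {aa k + (6 * k + 1)}"
    using Cset_eq(2) False unfolding i'_def by auto
  then show ?thesis
    using eq z by (simp only:) (rule setplus_singletonI)
qed

lemma in_rows_H8:
  assumes "in_rows k x"
  shows "x \<in> H8 k"
  using assms
proof (cases rule: in_rows_cases)
  case E
  then have "x \<in> Eset k"
    unfolding Eset_def from_on_def E_start_def by simp
  then show ?thesis
    unfolding H8_def by blast
next
  case zero
  then show ?thesis
    unfolding H8_def Aset_def by simp
next
  case (A i j)
  then have "x \<in> Aset k i"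
    using Aset_memI[of i "2 * j" k] by simp
  with A show ?thesis
    unfolding H8_def by auto
next
  case (B i j)
  then have "x \<in> Bset k i"
    using Bset_memI[of i "6 * k + 1 + 2 * j" k] by simp
  with B show ?thesis
    unfolding H8_def by auto
next
  case (C i t)
  then have "x \<in> Cset k i"
    using Cset_memI[of k i t] by simp
  with C show ?thesis
    unfolding H8_def by auto
next
  case (D i u)
  then have "x \<in> Dset k i"
    using Dset_memI[of u i k] by (auto simp: add.assoc)
  with D show ?thesis
    unfolding H8_def by auto
qed

lemma G8_eq_H8:
  assumes "0 < k"
  shows "G8 k = H8 k"
  using H8_subset_G8[OF assms] G8_in_rows in_rows_H8 by blast

lemma mem_H8_iff_in_rows:
  assumes "0 < k"
  shows "x \<in> H8 k \<longleftrightarrow> in_rows k x"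
  using G8_eq_H8[OF assms] G8_in_rows in_rows_H8 by blast

lemma Aset_bounds: "1 \<le> i \<Longrightarrow> y \<in> Aset k i \<Longrightarrow> i * aa k \<le> y \<and> y \<le> i * aa k + 2 * i"
  unfolding Aset_def intv2_def by auto

lemma Bset_bounds:
  assumes "1 \<le> i" "y \<in> Bset k i"
  shows "i * aa k + (6 * k + 1) \<le> y \<and> y \<le> i * aa k + (6 * k + 1) + 2 * (i - 1)"
proof -
  obtain z where z: "z \<in> Aset k (i - 1)" "y = z + (aa k + (6 * k + 1))"
    using assms(2) unfolding Bset_def mem_setplus_singleton_iff by auto
  obtain i' where i': "i = Suc i'"
    using assms(1) by (cases i) auto
  show ?thesis
  proof (cases "i' = 0")
    case True
    with z i' show ?thesis
      unfolding Aset_def by simp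
  next
    case False
    with z i' have "i' * aa k \<le> z \<and> z \<le> i' * aa k + 2 * i'"
      using Aset_bounds[of i' z k] by simp
    with z i' show ?thesis
      by simp
  qed
qed

lemma Dset_bounds:
  "i \<le> 6 * k \<Longrightarrow> y \<in> Dset k i \<Longrightarrow> i * aa k + (6 * k + 1) \<le> y \<and> y \<le> i * aa k + (6 * k + 1) + 6 * k"
  unfolding Dset_def intv_def intv2_def by auto

lemma Cset_bounds:
  assumes "3 * k + 1 \<le> i" "i \<le> 6 * k + 1" "y \<in> Cset k i"
  shows "i * aa k \<le> y \<and> y \<le> i * aa k + 6 * k"
proof (cases "i = 3 * k + 1 \<or> i = 3 * k + 2")
  case True
  with assms(3) show ?thesis
    using Cset_eq(1) unfolding intv2_def by auto
next
  case False
  with assms(3) have "y \<in> setplus (Dset k (i - 2)) {aa k + (6 * k + 1)}"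
    using Cset_eq(2) by auto
  then obtain z where z: "z \<in> Dset k (i - 2)" "y = z + (aa k + (6 * k + 1))"
    unfolding mem_setplus_singleton_iff by blast
  have "i * aa k = (i - 2) * aa k + 2 * aa k"
    using assms(1) False by (simp add: algebra_simps diff_mult_distrib)
  moreover have "(i - 2) * aa k + (6 * k + 1) \<le> z \<and> z \<le> (i - 2) * aa k + (6 * k + 1) + 6 * k"
    using Dset_bounds[OF _ z(1)] assms(2) by simp
  ultimately show ?thesis
    using z(2) by (simp add: aa_def)
qed

lemma H8_pieces_ordered:
  assumes "0 < k"
  shows "(\<forall>i\<in>{1..3 * k}. setless (Aset k i) (Bset k i))
    \<and> (\<forall>i\<in>{1..3 * k - 1}. setless (Bset k i) (Aset k (i + 1)))
    \<and> setless (Bset k (3 * k)) (Cset k (3 * k + 1))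
    \<and> (\<forall>i\<in>{3 * k + 1..6 * k}. setless (Cset k i) (Dset k i))
    \<and> (\<forall>i\<in>{3 * k + 1..6 * k}. setless (Dset k i) (Cset k (i + 1)))
    \<and> setless (Cset k (6 * k + 1)) (Eset k)"
proof (intro conjI ballI)
  have next_row: "(i + 1) * aa k = i * aa k + 12 * k + 2" for i
    by (simp add: aa_def)
  show "setless (Aset k i) (Bset k i)" if "i \<in> {1..3 * k}" for i
    unfolding setless_def using that Aset_bounds[of i _ k] Bset_bounds[of i _ k] by fastforce
  show "setless (Bset k i) (Aset k (i + 1))" if "i \<in> {1..3 * k - 1}" for i
    unfolding setless_def using that Aset_bounds[of "i + 1" _ k] Bset_bounds[of i _ k] next_row[of i]
    by fastforce
  show "setless (Bset k (3 * k)) (Cset k (3 * k + 1))"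
    unfolding setless_def using Bset_bounds[of "3 * k" _ k] Cset_bounds[of k "3 * k + 1"]
      next_row[of "3 * k"] assms by fastforce
  show "setless (Cset k i) (Dset k i)" if "i \<in> {3 * k + 1..6 * k}" for i
    unfolding setless_def using that Cset_bounds[of k i] Dset_bounds[of i k] by fastforce
  show "setless (Dset k i) (Cset k (i + 1))" if "i \<in> {3 * k + 1..6 * k}" for i
    unfolding setless_def using that Cset_bounds[of k "i + 1"] Dset_bounds[of i k] next_row[of i]
    by fastforce
  show "setless (Cset k (6 * k + 1)) (Eset k)"
    unfolding setless_def Eset_def from_on_def using Cset_bounds[of k "6 * k + 1"] by fastforce
qed

lemma enumerate_Suc_eq_successor:
  fixes H :: "nat set"
  assumes "infinite H"
    and succ: "\<And>x. x \<in> H \<Longrightarrow> x < f x \<and> f x \<in> H \<and> (\<forall>z. x < z \<and> z < f x \<longrightarrow> z \<notin> H)"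
  shows "enumerate H (Suc n) = f (enumerate H n)"
proof -
  have x: "enumerate H n \<in> H"
    using assms(1) by (rule enumerate_in_set)
  have "(LEAST y. y \<in> H \<and> enumerate H n < y) = f (enumerate H n)"
    by (rule Least_equality) (use succ[OF x] in \<open>auto simp: not_le\<close>)
  with assms(1) show ?thesis
    by (simp add: enumerate_Suc'')
qed

lemma enumerate_index:
  fixes H :: "nat set"
  assumes "infinite H"
    and succ: "\<And>n. enumerate H (Suc n) = f (enumerate H n)"
    and index_succ: "\<And>x. x \<in> H \<Longrightarrow> idx (f x) = Suc (idx x)"
    and "idx (enumerate H 0) = 0"
  shows "idx (enumerate H n) = n"
proof (induction n)
  case (Suc n)
  with succ index_succ enumerate_in_set[OF assms(1)] show ?case
    by simp
qed (fact assms(4))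

lemma bij_betw_mod3_of_distinct:
  fixes g :: "nat \<Rightarrow> nat"
  assumes "distinct [g 1 mod 3, g 2 mod 3, g 3 mod 3]"
  shows "bij_betw (\<lambda>j. g j mod 3) {1..3} {..<3}"
proof -
  have three: "{1..3 :: nat} = {1, 2, 3}"
    by auto
  have "inj_on (\<lambda>j. g j mod 3) {1..3}"
    using assms unfolding three by (auto simp: inj_on_def)
  moreover have "(\<lambda>j. g j mod 3) ` {1..3} = {..<3}"
  proof (rule card_subset_eq)
    show "(\<lambda>j. g j mod 3) ` {1..3} \<subseteq> {..<3}"
      by auto
    show "card ((\<lambda>j. g j mod 3) ` {1..3}) = card {..<3 :: nat}"
      using assms unfolding three by simp
  qed simp
  ultimately show ?thesis
    unfolding bij_betw_def by blast
qed

section \<open>Successor and position in \<open>H8 k\<close>\<close>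

text \<open>In rows \<open>i > 3k\<close> the step from an element to the next one is \<open>2\<close> inside the parts
  of \<open>C_i\<close> and \<open>D_i\<close> made of even offsets and \<open>1\<close> everywhere else, including the passage from
  \<open>C_i\<close> to \<open>D_i\<close> and from \<open>D_i\<close> to the next row.\<close>

definition H8_succ :: "nat \<Rightarrow> nat \<Rightarrow> nat" where
  "H8_succ k x = (let i = x div aa k; t = x mod aa k in
     if i = 0 then aa k
     else if i \<le> 3 * k then
       (if even t then (if t < 2 * i then x + 2 else i * aa k + (6 * k + 1))
        else (if t < 6 * k + 1 + 2 * (i - 1) then x + 2 else (i + 1) * aa k))
     else if (t < 6 * k + 1 \<and> 2 * (i - 2 - 3 * k) \<le> t \<and> t < 6 * k)
       \<or> (6 * k + 1 \<le> t \<and> 2 * (i - 3 * k) \<le> t - (6 * k + 1) \<and> t - (6 * k + 1) < 6 * k)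
     then x + 2 else x + 1)"

text \<open>The position of \<open>t\<close> in \<open>[0, L] \<union> [L + 2, \<infinity>[_2\<close> (for even \<open>L\<close>).\<close>

definition run_pos :: "nat \<Rightarrow> nat \<Rightarrow> nat" where
  "run_pos L t = (if t \<le> L then t else (L + t) div 2)"

lemma run_pos_le: "t \<le> L \<Longrightarrow> run_pos L t = t"
  unfolding run_pos_def by simp

lemma run_pos_even: "run_pos L (L + 2 * j) = L + j"
  unfolding run_pos_def by auto

text \<open>Row \<open>i \<le> 3k\<close> has \<open>2 i + 1\<close> elements, so it starts at index \<open>i\<^sup>2\<close>. Row \<open>i > 3k\<close> starts at
  index \<open>i\<^sup>2 - i + 3k + 2\<close> (except \<open>i = 3k + 1\<close>, where \<open>C_i\<close> has one element more than the
  general count), and its part \<open>D_i\<close> at \<open>i\<^sup>2 + 3k + 1\<close>.\<close>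

definition row_start_index :: "nat \<Rightarrow> nat \<Rightarrow> nat" where
  "row_start_index k i = (if i = 3 * k + 1 then i * i else i * i - i + 3 * k + 2)"

definition H8_index :: "nat \<Rightarrow> nat \<Rightarrow> nat" where
  "H8_index k x = (let i = x div aa k; t = x mod aa k in
     if i = 0 then 0
     else if i \<le> 3 * k then
       (if even t then i * i + t div 2 else i * i + i + 1 + (t - (6 * k + 1)) div 2)
     else if E_start k \<le> x then (6 * k + 1) * (6 * k + 1) + 3 * k + 1 + (x - E_start k)
     else if t < 6 * k + 1 then row_start_index k i + run_pos (2 * (i - 2 - 3 * k)) t
     else i * i + 3 * k + 1 + run_pos (2 * (i - 3 * k)) (t - (6 * k + 1)))"

lemma row_div_mod: "t < a \<Longrightarrow> (i * a + t) div a = i \<and> (i * a + t) mod a = (t::nat)"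
  by simp

lemma H8_succ_row:
  assumes "t < aa k"
  shows "H8_succ k (i * aa k + t) =
    (if i = 0 then aa k
     else if i \<le> 3 * k then
       (if even t then (if t < 2 * i then i * aa k + t + 2 else i * aa k + (6 * k + 1))
        else (if t < 6 * k + 1 + 2 * (i - 1) then i * aa k + t + 2 else (i + 1) * aa k))
     else if (t < 6 * k + 1 \<and> 2 * (i - 2 - 3 * k) \<le> t \<and> t < 6 * k)
       \<or> (6 * k + 1 \<le> t \<and> 2 * (i - 3 * k) \<le> t - (6 * k + 1) \<and> t - (6 * k + 1) < 6 * k)
     then i * aa k + t + 2 else i * aa k + t + 1)"
  unfolding H8_succ_def Let_def using row_div_mod[OF assms, of i] by simp

lemma H8_index_row:
  assumes "t < aa k"
  shows "H8_index k (i * aa k + t) =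
    (if i = 0 then 0
     else if i \<le> 3 * k then
       (if even t then i * i + t div 2 else i * i + i + 1 + (t - (6 * k + 1)) div 2)
     else if E_start k \<le> i * aa k + t then (6 * k + 1) * (6 * k + 1) + 3 * k + 1 + (i * aa k + t - E_start k)
     else if t < 6 * k + 1 then row_start_index k i + run_pos (2 * (i - 2 - 3 * k)) t
     else i * i + 3 * k + 1 + run_pos (2 * (i - 3 * k)) (t - (6 * k + 1)))"
  unfolding H8_index_def Let_def using row_div_mod[OF assms, of i] by simp

definition succ_step :: "nat \<Rightarrow> nat \<Rightarrow> bool" where
  "succ_step k x \<longleftrightarrow> x < H8_succ k x \<and> in_rows k (H8_succ k x)
    \<and> (\<forall>z. x < z \<and> z < H8_succ k x \<longrightarrow> \<not> in_rows k z)
    \<and> H8_index k (H8_succ k x) = Suc (H8_index k x)"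

lemma succ_stepI_row:
  assumes "t < t'" "t' < aa k" "H8_succ k (i * aa k + t) = i * aa k + t'" "row_has k i t'"
    "\<And>s. t < s \<Longrightarrow> s < t' \<Longrightarrow> \<not> row_has k i s"
    "H8_index k (i * aa k + t') = Suc (H8_index k (i * aa k + t))"
  shows "succ_step k (i * aa k + t)"
  unfolding succ_step_def assms(3)
proof (intro conjI allI impI)
  show "i * aa k + t < i * aa k + t'"
    using assms by simp
  show "in_rows k (i * aa k + t')"
    using assms in_rows_iff by simp
  fix z
  assume z: "i * aa k + t < z \<and> z < i * aa k + t'"
  then have "z = i * aa k + (z - i * aa k)" "z - i * aa k < aa k"
    using assms by auto
  moreover have "t < z - i * aa k" "z - i * aa k < t'"
    using z by linarith+
  ultimately show "\<not> in_rows k z"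
    using in_rows_iff[of "z - i * aa k" k i] assms(5)[of "z - i * aa k"] by metis
qed (use assms in simp)

lemma succ_stepI_next_row:
  assumes "t < aa k" "H8_succ k (i * aa k + t) = (i + 1) * aa k" "row_has k (i + 1) 0"
    "\<And>s. t < s \<Longrightarrow> s < aa k \<Longrightarrow> \<not> row_has k i s"
    "H8_index k ((i + 1) * aa k) = Suc (H8_index k (i * aa k + t))"
  shows "succ_step k (i * aa k + t)"
  unfolding succ_step_def assms(2)
proof (intro conjI allI impI)
  show "i * aa k + t < (i + 1) * aa k"
    using assms by simp
  show "in_rows k ((i + 1) * aa k)"
    using assms in_rows_iff[of 0 k "i + 1"] aa_pos by simp
  fix z
  assume z: "i * aa k + t < z \<and> z < (i + 1) * aa k"
  then have "z = i * aa k + (z - i * aa k)" "z - i * aa k < aa k"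
    using assms by auto
  moreover have "t < z - i * aa k"
    using z by linarith
  ultimately show "\<not> in_rows k z"
    using in_rows_iff[of "z - i * aa k" k i] assms(4)[of "z - i * aa k"] by metis
qed (use assms in simp)

lemma below_E_start_C:
  assumes "i \<le> 6 * k + 1" "t < 6 * k + 1"
  shows "i * aa k + t < E_start k"
proof -
  have "i * aa k \<le> (6 * k + 1) * aa k"
    using assms(1) by (rule mult_le_mono1)
  then show ?thesis
    using assms(2) unfolding E_start_def by linarith
qed

lemma below_E_start_D:
  assumes "i \<le> 6 * k" "t < aa k"
  shows "i * aa k + t < E_start k"
proof -
  have "(i + 1) * aa k \<le> (6 * k + 1) * aa k"
    using assms(1) by (intro mult_le_mono1) simp
  moreover have "(i + 1) * aa k = i * aa k + aa k"
    by simp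
  ultimately show ?thesis
    using assms(2) unfolding E_start_def by linarith
qed

lemma succ_step_0:
  assumes "k > 0"
  shows "succ_step k 0"
proof -
  have "succ_step k (0 * aa k + 0)"
  proof (rule succ_stepI_next_row)
    show "H8_succ k (0 * aa k + 0) = (0 + 1) * aa k"
      using H8_succ_row[of 0 k 0] aa_pos by simp
    show "row_has k (0 + 1) 0"
      using assms unfolding row_has_def by simp
    show "H8_index k ((0 + 1) * aa k) = Suc (H8_index k (0 * aa k + 0))"
      using H8_index_row[of 0 k 1] H8_index_row[of 0 k 0] aa_pos assms by simp
  qed (auto simp: row_has_def aa_pos)
  then show ?thesis
    by simp
qed

lemma succ_step_A:
  assumes "1 \<le> i" "i \<le> 3 * k" "t = 2 * j" "j < i"
  shows "succ_step k (i * aa k + t)"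
proof -
  have tl: "t + 2 < aa k" "t < aa k"
    using assms aa_def[of k] by linarith+
  show ?thesis
  proof (rule succ_stepI_row[of t "t + 2"])
    show "H8_succ k (i * aa k + t) = i * aa k + (t + 2)"
      using H8_succ_row[OF tl(2), of i] assms by simp
    show "row_has k i (t + 2)"
      using assms unfolding row_has_def by simp
    show "\<not> row_has k i s" if "t < s" "s < t + 2" for s
      using assms that unfolding row_has_def by auto
    show "H8_index k (i * aa k + (t + 2)) = Suc (H8_index k (i * aa k + t))"
      using H8_index_row[OF tl(1), of i] H8_index_row[OF tl(2), of i] assms by simp
  qed (use tl in auto)
qed

lemma succ_step_A_to_B:
  assumes "1 \<le> i" "i \<le> 3 * k" "t = 2 * i"
  shows "succ_step k (i * aa k + t)"
proof -
  have tl: "6 * k + 1 < aa k" "t < aa k" "t < 6 * k + 1"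
    using assms aa_def[of k] by linarith+
  show ?thesis
  proof (rule succ_stepI_row[of t "6 * k + 1"])
    show "H8_succ k (i * aa k + t) = i * aa k + (6 * k + 1)"
      using H8_succ_row[OF tl(2), of i] assms by simp
    show "row_has k i (6 * k + 1)"
      using assms unfolding row_has_def by simp
    show "\<not> row_has k i s" if "t < s" "s < 6 * k + 1" for s
      using assms that unfolding row_has_def by auto
    show "H8_index k (i * aa k + (6 * k + 1)) = Suc (H8_index k (i * aa k + t))"
      using H8_index_row[OF tl(1), of i] H8_index_row[OF tl(2), of i] assms by simp
  qed (use tl in auto)
qed

lemma succ_step_B:
  assumes "1 \<le> i" "i \<le> 3 * k" "t = 6 * k + 1 + 2 * j" "j + 2 \<le> i"
  shows "succ_step k (i * aa k + t)"
proof -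
  have tl: "t + 2 < aa k" "t < aa k"
    using assms aa_def[of k] by linarith+
  have o: "odd t" "odd (t + 2)" "even (t + 1)"
    using assms by simp_all
  have c: "t < 6 * k + 1 + 2 * (i - 1)" "t + 2 \<le> 6 * k + 1 + 2 * (i - 1)" "\<not> i \<le> 0" "6 * k + 1 \<le> t"
    using assms by linarith+
  have d: "(t - (6 * k + 1)) div 2 = j" "(t + 2 - (6 * k + 1)) div 2 = j + 1"
    using assms by simp_all
  show ?thesis
  proof (rule succ_stepI_row[of t "t + 2"])
    show "H8_succ k (i * aa k + t) = i * aa k + (t + 2)"
      using H8_succ_row[OF tl(2), of i] assms(2) o c by simp
    show "row_has k i (t + 2)"
      using assms(2) o c unfolding row_has_def by simp
    show "\<not> row_has k i s" if "t < s" "s < t + 2" for s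
    proof -
      have "s = t + 1"
        using that by simp
      moreover have "\<not> t + 1 \<le> 2 * i"
        using c assms(2) by linarith
      ultimately show ?thesis
        using assms(2) o c unfolding row_has_def by simp
    qed
    show "H8_index k (i * aa k + (t + 2)) = Suc (H8_index k (i * aa k + t))"
      using H8_index_row[OF tl(1), of i] H8_index_row[OF tl(2), of i] assms(2) o c d by simp
  qed (use tl in auto)
qed

lemma succ_step_B_to_next_row:
  assumes "1 \<le> i" "i \<le> 3 * k" "t = 6 * k + 1 + 2 * (i - 1)"
  shows "succ_step k (i * aa k + t)"
proof -
  have tl: "t < aa k"
    using assms aa_def[of k] by linarith
  have o: "odd t"
    using assms by simp
  have c: "\<not> t < 6 * k + 1 + 2 * (i - 1)" "\<not> i \<le> 0" "6 * k + 1 \<le> t"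
    using assms by linarith+
  have d: "(t - (6 * k + 1)) div 2 = i - 1"
    using assms by simp
  show ?thesis
  proof (rule succ_stepI_next_row)
    show "H8_succ k (i * aa k + t) = (i + 1) * aa k"
      using H8_succ_row[OF tl, of i] assms(2) o c by simp
    show "row_has k (i + 1) 0"
      using assms unfolding row_has_def by simp
    show "\<not> row_has k i s" if "t < s" "s < aa k" for s
    proof -
      have "\<not> s \<le> 2 * i" "\<not> s \<le> 6 * k + 1 + 2 * (i - 1)" "\<not> i \<le> 0"
        using that c assms(2) by linarith+
      then show ?thesis
        using assms(2) unfolding row_has_def by simp
    qed
    have e0: "(i + 1) * aa k + 0 < E_start k"
      by (rule below_E_start_C) (use assms in auto)
    have e: "\<not> E_start k \<le> (i + 1) * aa k + 0"
      using e0 by linarith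
    have ix: "H8_index k (i * aa k + t) = i * i + i + 1 + (i - 1)"
      using H8_index_row[OF tl, of i] assms(2) o c d by simp
    have iy: "H8_index k ((i + 1) * aa k + 0) = (i + 1) * (i + 1)"
    proof (cases "i + 1 \<le> 3 * k")
      case True
      then show ?thesis
        using H8_index_row[of 0 k "i + 1"] aa_pos by simp
    next
      case False
      then show ?thesis
        using H8_index_row[of 0 k "i + 1"] aa_pos e assms(2) by (simp add: row_start_index_def run_pos_le)
    qed
    show "H8_index k ((i + 1) * aa k) = Suc (H8_index k (i * aa k + t))"
      using ix iy assms(1) by (simp add: algebra_simps)
  qed (use tl in auto)
qed

lemma succ_step_C_dense:
  assumes "3 * k + 1 \<le> i" "i \<le> 6 * k + 1" "t + 1 \<le> 2 * (i - 2 - 3 * k)"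
  shows "succ_step k (i * aa k + t)"
proof -
  have tl: "t + 1 < aa k" "t < aa k"
    using assms aa_def[of k] by linarith+
  have c: "\<not> i \<le> 3 * k" "i \<noteq> 0" "t < 6 * k + 1" "t + 1 < 6 * k + 1" "\<not> 2 * (i - 2 - 3 * k) \<le> t" "\<not> 6 * k + 1 \<le> t"
    "t \<le> 2 * (i - 2 - 3 * k)" "t + 1 \<le> 2 * (i - 2 - 3 * k)"
    using assms by linarith+
  have e: "\<not> E_start k \<le> i * aa k + t" "\<not> E_start k \<le> i * aa k + (t + 1)"
    using below_E_start_C[of i k t] below_E_start_C[of i k "t + 1"] assms c by linarith+
  show ?thesis
  proof (rule succ_stepI_row[of t "t + 1"])
    show "H8_succ k (i * aa k + t) = i * aa k + (t + 1)"
      using H8_succ_row[OF tl(2), of i] c by simp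
    show "row_has k i (t + 1)"
      using c unfolding row_has_def by simp
    have ix: "H8_index k (i * aa k + t) = row_start_index k i + t"
      using H8_index_row[OF tl(2), of i] c e by (simp add: run_pos_le)
    have iy: "H8_index k (i * aa k + (t + 1)) = row_start_index k i + (t + 1)"
      using H8_index_row[OF tl(1), of i] c e by (simp add: run_pos_le)
    show "H8_index k (i * aa k + (t + 1)) = Suc (H8_index k (i * aa k + t))"
      using ix iy by simp
  qed (use tl in auto)
qed

lemma succ_step_C_even:
  assumes "3 * k + 1 \<le> i" "i \<le> 6 * k + 1" "t = 2 * (i - 2 - 3 * k) + 2 * j" "t < 6 * k"
  shows "succ_step k (i * aa k + t)"
proof -
  have "even t"
    using assms(3) by simp
  then have t2: "t + 2 \<le> 6 * k"
    using assms(4) by (auto elim!: evenE)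
  have tl: "t + 2 < aa k" "t < aa k"
    using assms aa_def[of k] t2 by linarith+
  have c: "\<not> i \<le> 3 * k" "i \<noteq> 0" "t < 6 * k + 1" "t + 2 < 6 * k + 1" "2 * (i - 2 - 3 * k) \<le> t" "\<not> 6 * k + 1 \<le> t"
    "\<not> t + 1 \<le> 2 * (i - 2 - 3 * k)" "t + 2 \<le> 6 * k"
    using assms t2 by linarith+
  have ev: "even t" "even (t + 2)" "odd (t + 1)"
    using assms(3) by simp_all
  have e: "\<not> E_start k \<le> i * aa k + t" "\<not> E_start k \<le> i * aa k + (t + 2)"
    using below_E_start_C[of i k t] below_E_start_C[of i k "t + 2"] assms c by linarith+
  have p1: "run_pos (2 * (i - 2 - 3 * k)) t = 2 * (i - 2 - 3 * k) + j"
    unfolding assms(3) by (rule run_pos_even)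
  have "t + 2 = 2 * (i - 2 - 3 * k) + 2 * (j + 1)"
    using assms(3) by simp
  then have p2: "run_pos (2 * (i - 2 - 3 * k)) (t + 2) = 2 * (i - 2 - 3 * k) + (j + 1)"
    by (metis run_pos_even)
  show ?thesis
  proof (rule succ_stepI_row[of t "t + 2"])
    show "H8_succ k (i * aa k + t) = i * aa k + (t + 2)"
      using H8_succ_row[OF tl(2), of i] c by simp
    show "row_has k i (t + 2)"
      using c ev unfolding row_has_def by simp
    show "\<not> row_has k i s" if "t < s" "s < t + 2" for s
    proof -
      have "s = t + 1"
        using that by simp
      then show ?thesis
        using c ev unfolding row_has_def by simp
    qed
    have ix: "H8_index k (i * aa k + t) = row_start_index k i + (2 * (i - 2 - 3 * k) + j)"
      using H8_index_row[OF tl(2), of i] c e p1 by simp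
    have iy: "H8_index k (i * aa k + (t + 2)) = row_start_index k i + (2 * (i - 2 - 3 * k) + (j + 1))"
      using H8_index_row[OF tl(1), of i] c e p2 by simp
    show "H8_index k (i * aa k + (t + 2)) = Suc (H8_index k (i * aa k + t))"
      using ix iy by simp
  qed (use tl in auto)
qed

lemma succ_step_C_to_D:
  assumes "3 * k + 1 \<le> i" "i \<le> 6 * k + 1" "t = 6 * k" "k > 0"
  shows "succ_step k (i * aa k + t)"
proof -
  have tl: "6 * k + 1 < aa k" "t < aa k"
    using assms aa_def[of k] by linarith+
  have c: "\<not> i \<le> 3 * k" "i \<noteq> 0" "t < 6 * k + 1" "\<not> t < 6 * k" "\<not> 6 * k + 1 \<le> t"
    using assms by linarith+
  have e: "\<not> E_start k \<le> i * aa k + t"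
    using below_E_start_C[of i k t] assms c by linarith
  have p: "run_pos (2 * (i - 2 - 3 * k)) (6 * k) = (if i = 3 * k + 1 then 3 * k else i - 2)"
    unfolding run_pos_def using assms by auto
  have ix: "H8_index k (i * aa k + t) = i * i + 3 * k"
  proof -
    have "H8_index k (i * aa k + t) = row_start_index k i + run_pos (2 * (i - 2 - 3 * k)) (6 * k)"
      using H8_index_row[OF tl(2), of i] c e assms(3) by simp
    moreover have "i \<noteq> 3 * k + 1 \<Longrightarrow> i * i - i + 3 * k + 2 + (i - 2) = i * i + 3 * k"
    proof -
      assume "i \<noteq> 3 * k + 1"
      then have "2 \<le> i"
        using assms(1) by linarith
      moreover have "i \<le> i * i"
        by (rule le_square)
      ultimately show ?thesis
        by linarith
    qed
    ultimately show ?thesis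
      using p unfolding row_start_index_def by (cases "i = 3 * k + 1") simp_all
  qed
  have iy: "H8_index k (i * aa k + (6 * k + 1)) = i * i + 3 * k + 1"
  proof (cases "i \<le> 6 * k")
    case True
    then have "\<not> E_start k \<le> i * aa k + (6 * k + 1)"
      using below_E_start_D[of i k "6 * k + 1"] tl by linarith
    then show ?thesis
      using H8_index_row[OF tl(1), of i] c by (simp add: run_pos_le)
  next
    case False
    then have "i = 6 * k + 1"
      using assms by simp
    then have "i * aa k + (6 * k + 1) = E_start k"
      unfolding E_start_def by simp
    then show ?thesis
      using H8_index_row[OF tl(1), of i] c \<open>i = 6*k+1\<close> by simp
  qed
  show ?thesis
  proof (rule succ_stepI_row[of t "6 * k + 1"])
    show "H8_succ k (i * aa k + t) = i * aa k + (6 * k + 1)"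
      using H8_succ_row[OF tl(2), of i] c assms(3) by simp
    show "row_has k i (6 * k + 1)"
      using c unfolding row_has_def by simp
    show "H8_index k (i * aa k + (6 * k + 1)) = Suc (H8_index k (i * aa k + t))"
      using ix iy by simp
  qed (use tl assms in auto)
qed

lemma succ_step_D_dense:
  assumes "3 * k + 1 \<le> i" "i \<le> 6 * k" "t = 6 * k + 1 + u" "u + 1 \<le> 2 * (i - 3 * k)"
  shows "succ_step k (i * aa k + t)"
proof -
  have tl: "t + 1 < aa k" "t < aa k"
    using assms aa_def[of k] by linarith+
  have c: "\<not> i \<le> 3 * k" "i \<noteq> 0" "\<not> t < 6 * k + 1" "\<not> t + 1 < 6 * k + 1" "\<not> 2 * (i - 3 * k) \<le> t - (6 * k + 1)"
    "t - (6 * k + 1) = u" "t + 1 - (6 * k + 1) = u + 1" "u \<le> 2 * (i - 3 * k)" "6 * k + 1 \<le> t"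
    using assms by linarith+
  have e: "\<not> E_start k \<le> i * aa k + t" "\<not> E_start k \<le> i * aa k + (t + 1)"
    using below_E_start_D[of i k t] below_E_start_D[of i k "t + 1"] assms tl by linarith+
  show ?thesis
  proof (rule succ_stepI_row[of t "t + 1"])
    show "H8_succ k (i * aa k + t) = i * aa k + (t + 1)"
      using H8_succ_row[OF tl(2), of i] c by simp
    show "row_has k i (t + 1)"
      using c assms(4) unfolding row_has_def by simp
    have ix: "H8_index k (i * aa k + t) = i * i + 3 * k + 1 + u"
      using H8_index_row[OF tl(2), of i] c e by (simp add: run_pos_le)
    have iy: "H8_index k (i * aa k + (t + 1)) = i * i + 3 * k + 1 + (u + 1)"
      using H8_index_row[OF tl(1), of i] c e assms(4) by (simp add: run_pos_le)
    show "H8_index k (i * aa k + (t + 1)) = Suc (H8_index k (i * aa k + t))"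
      using ix iy by simp
  qed (use tl in auto)
qed

lemma succ_step_D_even:
  assumes "3 * k + 1 \<le> i" "i \<le> 6 * k" "t = 6 * k + 1 + u" "u = 2 * (i - 3 * k) + 2 * j" "u < 6 * k"
  shows "succ_step k (i * aa k + t)"
proof -
  have "even u"
    using assms(4) by simp
  then have u2: "u + 2 \<le> 6 * k"
    using assms(5) by (auto elim!: evenE)
  have tl: "t + 2 < aa k" "t < aa k"
    using assms aa_def[of k] u2 by linarith+
  have c: "\<not> i \<le> 3 * k" "i \<noteq> 0" "\<not> t < 6 * k + 1" "\<not> t + 2 < 6 * k + 1" "2 * (i - 3 * k) \<le> t - (6 * k + 1)"
    "t - (6 * k + 1) = u" "t + 2 - (6 * k + 1) = u + 2" "t + 1 - (6 * k + 1) = u + 1" "6 * k + 1 \<le> t" "u < 6 * k"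
    "\<not> u + 1 \<le> 2 * (i - 3 * k)"
    using assms by linarith+
  have ev: "even u" "even (u + 2)" "odd (u + 1)"
    using assms(4) by simp_all
  have e: "\<not> E_start k \<le> i * aa k + t" "\<not> E_start k \<le> i * aa k + (t + 2)"
    using below_E_start_D[of i k t] below_E_start_D[of i k "t + 2"] assms tl by linarith+
  have p1: "run_pos (2 * (i - 3 * k)) u = 2 * (i - 3 * k) + j"
    unfolding assms(4) by (rule run_pos_even)
  have "u + 2 = 2 * (i - 3 * k) + 2 * (j + 1)"
    using assms(4) by simp
  then have p2: "run_pos (2 * (i - 3 * k)) (u + 2) = 2 * (i - 3 * k) + (j + 1)"
    by (metis run_pos_even)
  show ?thesis
  proof (rule succ_stepI_row[of t "t + 2"])
    show "H8_succ k (i * aa k + t) = i * aa k + (t + 2)"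
      using H8_succ_row[OF tl(2), of i] c by simp
    show "row_has k i (t + 2)"
      using c ev unfolding row_has_def by simp
    show "\<not> row_has k i s" if "t < s" "s < t + 2" for s
    proof -
      have "s = t + 1"
        using that by simp
      then show ?thesis
        using c ev unfolding row_has_def by simp
    qed
    have ix: "H8_index k (i * aa k + t) = i * i + 3 * k + 1 + (2 * (i - 3 * k) + j)"
      using H8_index_row[OF tl(2), of i] c e p1 by simp
    have iy: "H8_index k (i * aa k + (t + 2)) = i * i + 3 * k + 1 + (2 * (i - 3 * k) + (j + 1))"
      using H8_index_row[OF tl(1), of i] c e p2 by simp
    show "H8_index k (i * aa k + (t + 2)) = Suc (H8_index k (i * aa k + t))"
      using ix iy by simp
  qed (use tl in auto)
qed

lemma succ_step_D_to_next_row: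
  assumes "3 * k + 1 \<le> i" "i \<le> 6 * k" "t = 12 * k + 1"
  shows "succ_step k (i * aa k + t)"
proof -
  have tl: "t < aa k" "t + 1 = aa k"
    using assms aa_def[of k] by linarith+
  have c: "\<not> i \<le> 3 * k" "i \<noteq> 0" "\<not> t < 6 * k + 1" "t - (6 * k + 1) = 6 * k" "\<not> 6 * k < 6 * k"
    using assms by linarith+
  have e: "\<not> E_start k \<le> i * aa k + t"
    using below_E_start_D[of i k t] assms tl by linarith
  have p: "run_pos (2 * (i - 3 * k)) (6 * k) = i"
    unfolding run_pos_def using assms by auto
  show ?thesis
  proof (rule succ_stepI_next_row)
    have "H8_succ k (i * aa k + t) = i * aa k + t + 1"
      using H8_succ_row[OF tl(1), of i] c by simp
    then show "H8_succ k (i * aa k + t) = (i + 1) * aa k"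
      using tl by simp
    show "row_has k (i + 1) 0"
      using assms unfolding row_has_def by simp
    show "\<not> row_has k i s" if "t < s" "s < aa k" for s
      using that tl by simp
    have ix: "H8_index k (i * aa k + t) = i * i + 3 * k + 1 + i"
      using H8_index_row[OF tl(1), of i] c e p by simp
    have e0: "(i + 1) * aa k + 0 < E_start k"
      by (rule below_E_start_C) (use assms in auto)
    have iy: "H8_index k ((i + 1) * aa k + 0) = (i + 1) * (i + 1) - (i + 1) + 3 * k + 2"
      using H8_index_row[of 0 k "i + 1"] aa_pos e0 assms by (simp add: row_start_index_def run_pos_le)
    show "H8_index k ((i + 1) * aa k) = Suc (H8_index k (i * aa k + t))"
      using ix iy by (simp add: algebra_simps)
  qed (use tl in auto)
qed

lemma H8_index_E:
  assumes "E_start k \<le> x"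
  shows "H8_index k x = (6 * k + 1) * (6 * k + 1) + 3 * k + 1 + (x - E_start k)"
proof -
  obtain i t where x: "x = i * aa k + t" "t < aa k"
    by (rule row_decomp)
  have "6 * k + 2 \<le> i \<or> (i = 6 * k + 1 \<and> 6 * k + 1 \<le> t)"
    using E_start_rowE assms x by simp
  then have "i \<noteq> 0" "\<not> i \<le> 3 * k"
    by auto
  then show ?thesis
    using H8_index_row[OF x(2), of i] assms x(1) by simp
qed

lemma H8_succ_E:
  assumes "E_start k \<le> x"
  shows "H8_succ k x = x + 1"
proof -
  obtain i t where x: "x = i * aa k + t" "t < aa k"
    by (rule row_decomp)
  have "6 * k + 2 \<le> i \<or> (i = 6 * k + 1 \<and> 6 * k + 1 \<le> t)"
    using E_start_rowE assms x by simp
  with x show ?thesis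
    using H8_succ_row[OF x(2), of i] by auto
qed

lemma succ_step_E:
  assumes "E_start k \<le> x"
  shows "succ_step k x"
proof -
  have n: "H8_succ k x = x + 1"
    using assms by (rule H8_succ_E)
  show ?thesis
    unfolding succ_step_def n
  proof (intro conjI allI impI)
    show "in_rows k (x + 1)"
      using assms by (intro in_rows_E) simp
    show "H8_index k (x + 1) = Suc (H8_index k x)"
      using assms H8_index_E[of k x] H8_index_E[of k "x + 1"] by simp
  qed auto
qed

lemma dense_then_even_cases:
  fixes l t m :: nat
  assumes "t \<le> 2 * l \<or> even t" "t \<le> m"
  obtains "t + 1 \<le> 2 * l" | "t = m" | j where "t = 2 * l + 2 * j" "t < m"
proof (cases "t + 1 \<le> 2 * l")
  case False
  then have "2 * l \<le> t"
    by simp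
  moreover from this assms(1) False have "even t"
    by (metis antisym even_mult_iff even_numeral)
  ultimately have "t = 2 * l + 2 * ((t - 2 * l) div 2)"
    by presburger
  with assms(2) that show thesis
    by (cases "t = m") auto
qed

lemma succ_step_of_in_rows:
  assumes "in_rows k x" "0 < k"
  shows "succ_step k x"
  using assms(1)
proof (cases rule: in_rows_cases)
  case E
  then show ?thesis
    by (rule succ_step_E)
next
  case zero
  then show ?thesis
    using succ_step_0 assms(2) by simp
next
  case (A i j)
  then show ?thesis
    using succ_step_A[of i k "2 * j" j] succ_step_A_to_B[of i k "2 * j"] by (cases "j = i") simp_all
next
  case (B i j)
  then show ?thesis
    using succ_step_B[OF _ _ refl, of i k j] succ_step_B_to_next_row[OF _ _ refl, of i k]
    by (cases "j + 1 = i") auto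
next
  case (C i t)
  have "t \<le> 2 * (i - 2 - 3 * k) \<or> even t" "t \<le> 6 * k"
    using C(3,4) by auto
  then show ?thesis
    by (cases rule: dense_then_even_cases[of t "i - 2 - 3 * k"])
      (use C succ_step_C_dense succ_step_C_to_D assms(2) succ_step_C_even in simp_all)
next
  case (D i u)
  from D(4,3) show ?thesis
    by (cases rule: dense_then_even_cases[of u "i - 3 * k"])
      (use D succ_step_D_dense[OF _ _ refl] succ_step_D_to_next_row succ_step_D_even[OF _ _ refl] in auto)
qed

section \<open>Residues modulo 3\<close>

definition residues_distinct :: "nat \<Rightarrow> nat \<Rightarrow> bool" where
  "residues_distinct k x \<longleftrightarrow> distinct [x mod 3, H8_succ k x mod 3, H8_succ k (H8_succ k x) mod 3]"

lemma distinct_mod3_progression: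
  fixes x d :: nat
  assumes "d mod 3 \<noteq> 0"
  shows "distinct [x mod 3, (x + d) mod 3, (x + d + d) mod 3]"
proof -
  have "x mod 3 \<noteq> (x + d) mod 3" "(x + d) mod 3 \<noteq> (x + d + d) mod 3" "x mod 3 \<noteq> (x + d + d) mod 3"
    using assms by presburger+
  then show ?thesis
    by simp
qed

lemma residues_distinct_run:
  "H8_succ k x = x + d \<Longrightarrow> H8_succ k (x + d) = x + d + d \<Longrightarrow> d mod 3 \<noteq> 0 \<Longrightarrow> residues_distinct k x"
  unfolding residues_distinct_def using distinct_mod3_progression by simp

lemma square_mod_3: "(i * i) mod 3 = (if i mod 3 = 0 then 0 else (1::nat))"
proof -
  have e: "(i * i) mod 3 = ((i mod 3) * (i mod 3)) mod 3"
    by (simp add: mod_mult_eq)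
  have "i mod 3 = 0 \<or> i mod 3 = 1 \<or> i mod 3 = 2"
    by arith
  then show ?thesis
    using e by auto
qed

lemma row_mod_3: "(i * aa k) mod 3 = (2 * i) mod 3"
proof -
  have "aa k mod 3 = 2"
    using aa_def[of k] by presburger
  then have "(i * aa k) mod 3 = (i * 2) mod 3"
    by (metis mod_mult_right_eq)
  then show ?thesis
    by (simp add: mult.commute)
qed

lemma residues_distinct_E:
  assumes "E_start k \<le> x"
  shows "residues_distinct k x"
  using residues_distinct_run[of k x 1] assms H8_succ_E by simp

lemma obtain_square:
  fixes i :: nat
  obtains s where "s = i * i" "s mod 3 = (if i mod 3 = 0 then 0 else 1)" "i \<le> s"
  using square_mod_3[of i] le_square[of i] by blast

lemma mod3_add_multiple: "a + 3 * m = (b::nat) \<Longrightarrow> a mod 3 = c \<Longrightarrow> b mod 3 = c"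
  by auto

lemma mod3_succ_of_1: "a + 1 = (b::nat) \<Longrightarrow> a mod 3 = 1 \<Longrightarrow> b mod 3 = 2"
  by presburger

text \<open>In the following facts about squares modulo 3, \<open>s\<close> stands for \<open>i * i\<close>, which keeps them
  within the reach of \<open>presburger\<close>.\<close>

lemma square_add_mod3_ne_1: "s mod 3 = (if (i::nat) mod 3 = 0 then 0 else 1) \<Longrightarrow> (s + i) mod 3 \<noteq> 1"
  by presburger

lemma square_add_twice_mod3_ne_1: "s mod 3 = (if (i::nat) mod 3 = 0 then 0 else 1) \<Longrightarrow> (s + 2 * i) mod 3 \<noteq> 1"
  by presburger

lemma square_mod3_ne_2: "s mod 3 = (if (i::nat) mod 3 = 0 then 0 else 1) \<Longrightarrow> s mod 3 \<noteq> (2::nat)"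
  by presburger

lemma square_add_twice_mod3_eq_2:
  "s mod 3 = (if (i::nat) mod 3 = 0 then 0 else 1) \<Longrightarrow> (s + 2 * i) mod 3 = 2 \<Longrightarrow> i mod 3 = 2"
  by presburger

lemma square_add_mod3_eq_2:
  "s mod 3 = (if (i::nat) mod 3 = 0 then 0 else 1) \<Longrightarrow> (s + i) mod 3 = 2 \<Longrightarrow> i mod 3 = 1"
  by presburger

lemma C_offset_cases:
  fixes l t :: nat
  assumes "t < 6 * k + 1" "t \<le> 2 * l \<or> (even t \<and> t \<le> 6 * k)" "2 * l + 2 \<le> 6 * k"
  obtains "t + 2 \<le> 2 * l" | "t + 1 = 2 * l" | "t = 6 * k" | "2 * l \<le> t" "t < 6 * k" "even t"
proof -
  have "t + 2 \<le> 2 * l \<or> t + 1 = 2 * l \<or> t = 6 * k \<or> (2 * l \<le> t \<and> t < 6 * k \<and> even t)"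
    using assms by presburger
  with that show thesis
    by blast
qed

lemma D_offset_cases:
  fixes m u :: nat
  assumes "u \<le> 6 * k" "u \<le> 2 * m \<or> even u" "2 * m \<le> 6 * k"
  obtains "u + 2 \<le> 2 * m" | "u + 1 = 2 * m" "2 * m = 6 * k" | "u + 1 = 2 * m" "2 * m < 6 * k"
    | "u = 6 * k" "u + 1 \<noteq> 2 * m" | "2 * m \<le> u" "u < 6 * k" "even u"
proof -
  have "u + 2 \<le> 2 * m \<or> (u + 1 = 2 * m \<and> 2 * m = 6 * k) \<or> (u + 1 = 2 * m \<and> 2 * m < 6 * k)
    \<or> (u = 6 * k \<and> u + 1 \<noteq> 2 * m) \<or> (2 * m \<le> u \<and> u < 6 * k \<and> even u)"
    using assms by presburger
  with that show thesis
    by blast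
qed

lemma residues_distinct_A:
  assumes "1 \<le> i" "i \<le> 3 * k" "t = 2 * j" "j \<le> i" "H8_index k (i * aa k + t) mod 3 = 1"
  shows "residues_distinct k (i * aa k + t)"
proof -
  have k1: "1 \<le> k"
    using assms(1,2) by presburger
  have tl: "t < aa k" "t + 2 < aa k" "t + 4 < aa k"
    using assms aa_def[of k] k1 by linarith+
  have ix: "H8_index k (i * aa k + t) = i * i + j"
    using H8_index_row[OF tl(1), of i] assms(1-3) by simp
  obtain s where s: "s = i * i" "s mod 3 = (if i mod 3 = 0 then 0 else 1)" "i \<le> s"
    by (rule obtain_square)
  have v: "(s + j) mod 3 = 1"
    using assms(5) ix s(1) by simp
  consider "j = i" | "j + 1 = i" | "j + 2 \<le> i"
    using assms(4) by linarith
  then show ?thesis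
  proof cases
    case 1
    then have False
      using v square_add_mod3_ne_1[OF s(2)] by simp
    then show ?thesis ..
  next
    case 2
    have eq: "(s + j) + 1 = s + i"
      using 2 by simp
    have "(s + i) mod 3 = 2"
      by (rule mod3_succ_of_1[OF eq v])
    then have i1: "i mod 3 = 1"
      using square_add_mod3_eq_2[OF s(2)] by simp
    have n1: "H8_succ k (i * aa k + t) = i * aa k + (t + 2)"
      using H8_succ_row[OF tl(1), of i] assms 2 by simp
    have n2: "H8_succ k (i * aa k + (t + 2)) = i * aa k + (6 * k + 1)"
      using H8_succ_row[OF tl(2), of i] assms 2 by simp
    define P where "P = i * aa k"
    have pm: "P mod 3 = (2 * i) mod 3"
      unfolding P_def by (rule row_mod_3)
    have p2: "P mod 3 = 2"
      using pm i1 by presburger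
    have t0: "t mod 3 = 0"
      using i1 assms(3) 2 by presburger
    have r: "(P + t) mod 3 = 2" "(P + (t + 2)) mod 3 = 1" "(P + (6 * k + 1)) mod 3 = 0"
      using p2 t0 by presburger+
    show ?thesis
      unfolding residues_distinct_def n1 n2 unfolding P_def[symmetric] using r by simp
  next
    case 3
    have n1: "H8_succ k (i * aa k + t) = i * aa k + t + 2"
      using H8_succ_row[OF tl(1), of i] assms 3 by simp
    have n2: "H8_succ k (i * aa k + t + 2) = i * aa k + t + 2 + 2"
      using H8_succ_row[OF tl(2), of i] assms 3 by simp
    show ?thesis
      by (rule residues_distinct_run[OF n1 n2]) simp
  qed
qed

lemma residues_distinct_B:
  assumes "1 \<le> i" "i \<le> 3 * k" "t = 6 * k + 1 + 2 * j" "j + 1 \<le> i"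
    "H8_index k (i * aa k + t) mod 3 = 1"
  shows "residues_distinct k (i * aa k + t)"
proof -
  have tl: "t < aa k" "t + 2 < aa k"
    using assms aa_def[of k] by linarith+
  have o: "odd t" "odd (t + 2)"
    using assms(3) by simp_all
  have d: "(t - (6 * k + 1)) div 2 = j" "(t + 2 - (6 * k + 1)) div 2 = j + 1"
    using assms(3) by simp_all
  have ix: "H8_index k (i * aa k + t) = i * i + i + 1 + j"
    using H8_index_row[OF tl(1), of i] assms(1,2) o d by simp
  obtain s where s: "s = i * i" "s mod 3 = (if i mod 3 = 0 then 0 else 1)" "i \<le> s"
    by (rule obtain_square)
  have v: "(s + i + 1 + j) mod 3 = 1"
    using assms(5) ix s(1) by simp
  consider "j + 1 = i" | "j + 2 = i" | "j + 3 \<le> i"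
    using assms(4) by linarith
  then show ?thesis
  proof cases
    case 1
    then have eq: "s + i + 1 + j = s + 2 * i"
      by simp
    have "(s + 2 * i) mod 3 = 1"
      using v unfolding eq .
    then have False
      using square_add_twice_mod3_ne_1[OF s(2)] by simp
    then show ?thesis ..
  next
    case 2
    have eq: "(s + i + 1 + j) + 1 = s + 2 * i"
      using 2 by simp
    have "(s + 2 * i) mod 3 = 2"
      by (rule mod3_succ_of_1[OF eq v])
    then have i1: "i mod 3 = 2"
      using square_add_twice_mod3_eq_2[OF s(2)] by simp
    have c1: "t < 6 * k + 1 + 2 * (i - 1)" "\<not> t + 2 < 6 * k + 1 + 2 * (i - 1)"
      using assms(3) 2 by linarith+
    have n1: "H8_succ k (i * aa k + t) = i * aa k + (t + 2)"
      using H8_succ_row[OF tl(1), of i] assms(1,2) o c1 by simp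
    have n2: "H8_succ k (i * aa k + (t + 2)) = i * aa k + aa k"
      using H8_succ_row[OF tl(2), of i] assms(1,2) o c1 by simp
    define P where "P = i * aa k"
    have pm: "P mod 3 = (2 * i) mod 3"
      unfolding P_def by (rule row_mod_3)
    have p2: "P mod 3 = 1"
      using pm i1 by presburger
    have t0: "t mod 3 = 1"
      using i1 assms(3) 2 by presburger
    have r: "(P + t) mod 3 = 2" "(P + (t + 2)) mod 3 = 1" "(P + aa k) mod 3 = 0"
      using p2 t0 aa_def[of k] by presburger+
    show ?thesis
      unfolding residues_distinct_def n1 n2 unfolding P_def[symmetric] using r by simp
  next
    case 3
    have c1: "t < 6 * k + 1 + 2 * (i - 1)" "t + 2 < 6 * k + 1 + 2 * (i - 1)"
      using assms(3) 3 by linarith+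
    have n1: "H8_succ k (i * aa k + t) = i * aa k + t + 2"
      using H8_succ_row[OF tl(1), of i] assms(1,2) o c1 by simp
    have n2: "H8_succ k (i * aa k + t + 2) = i * aa k + t + 2 + 2"
      using H8_succ_row[OF tl(2), of i] assms(1,2) o c1 by simp
    show ?thesis
      by (rule residues_distinct_run[OF n1 n2]) simp
  qed
qed

lemma residues_distinct_C:
  assumes "3 * k + 1 \<le> i" "i \<le> 6 * k + 1" "t < 6 * k + 1" "t \<le> 2 * (i - 2 - 3 * k) \<or> (even t \<and> t \<le> 6 * k)"
    "k > 0" "H8_index k (i * aa k + t) mod 3 = 1"
  shows "residues_distinct k (i * aa k + t)"
proof -
  have tl: "t < aa k" "t + 1 < aa k" "t + 2 < aa k" "6 * k + 1 < aa k"
    using assms aa_def[of k] by linarith+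
  have c0: "\<not> i \<le> 3 * k" "i \<noteq> 0"
    using assms by linarith+
  have e: "\<not> E_start k \<le> i * aa k + t"
    using below_E_start_C[of i k t] assms by linarith
  obtain s where s: "s = i * i" "s mod 3 = (if i mod 3 = 0 then 0 else 1)" "i \<le> s"
    by (rule obtain_square)
  have ic: "H8_index k (i * aa k + t) = row_start_index k i + run_pos (2 * (i - 2 - 3 * k)) t"
    using H8_index_row[OF tl(1), of i] c0 e assms(3) by simp
  have "2 * (i - 2 - 3 * k) + 2 \<le> 6 * k"
    using assms(2,5) by linarith
  with assms(3,4) show ?thesis
  proof (cases rule: C_offset_cases)
    case 1
    have c: "\<not> 2 * (i - 2 - 3 * k) \<le> t" "\<not> 2 * (i - 2 - 3 * k) \<le> t + 1" "t + 1 < 6 * k + 1"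
      using 1 assms by linarith+
    have n1: "H8_succ k (i * aa k + t) = i * aa k + t + 1"
      using H8_succ_row[OF tl(1), of i] c0 c assms(3) by simp
    have n2: "H8_succ k (i * aa k + t + 1) = i * aa k + t + 1 + 1"
      using H8_succ_row[OF tl(2), of i] c0 c by simp
    show ?thesis
      by (rule residues_distinct_run[OF n1 n2]) simp
  next
    case 2
    have "i \<noteq> 3 * k + 1"
      using 2 by auto
    then have "H8_index k (i * aa k + t) = s - i + 3 * k + 2 + t"
      using ic 2 s(1) unfolding row_start_index_def by (simp add: run_pos_le)
    then have v: "(s - i + 3 * k + 2 + t) mod 3 = 1"
      using assms(6) by simp
    have "(s - i + 3 * k + 2 + t) + 3 * (k + 1) = s + i"
      using 2 s(3) assms(1) by arith
    then have "(s + i) mod 3 = 1"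
      using v by (rule mod3_add_multiple)
    then have False
      using square_add_mod3_ne_1[OF s(2)] by simp
    then show ?thesis ..
  next
    case 3
    have n1: "H8_succ k (i * aa k + t) = i * aa k + t + 1"
      using H8_succ_row[OF tl(1), of i] c0 3 by simp
    have n2: "H8_succ k (i * aa k + t + 1) = i * aa k + t + 1 + 1"
      using H8_succ_row[OF tl(4), of i] c0 3 assms(1) by simp
    show ?thesis
      by (rule residues_distinct_run[OF n1 n2]) simp
  next
    case 4
    then have "2 * ((t - 2 * (i - 2 - 3 * k)) div 2) = t - 2 * (i - 2 - 3 * k)"
      by (intro even_two_times_div_two) simp
    with 4 have te: "t = 2 * (i - 2 - 3 * k) + 2 * ((t - 2 * (i - 2 - 3 * k)) div 2)"
      by linarith
    show ?thesis
    proof (cases "t + 2 = 6 * k")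
      case True
      obtain J where J: "t = 2 * (i - 2 - 3 * k) + 2 * J"
        using te by blast
      have p: "run_pos (2 * (i - 2 - 3 * k)) t = 2 * (i - 2 - 3 * k) + J"
        unfolding J by (rule run_pos_even)
      have v: "(row_start_index k i + (2 * (i - 2 - 3 * k) + J)) mod 3 = 1"
        using assms(6) ic p by simp
      have eq: "row_start_index k i + (2 * (i - 2 - 3 * k) + J) + 1 = s + 3 * k"
      proof (cases "i = 3 * k + 1")
        case True
        then show ?thesis
          using J \<open>t + 2 = 6*k\<close> s(1) unfolding row_start_index_def by simp
      next
        case False
        then have "row_start_index k i = s - i + 3 * k + 2"
          unfolding row_start_index_def s(1) by simp
        then show ?thesis
          using J \<open>t + 2 = 6*k\<close> s(3) assms(1) False by arith
      qed
      have "(s + 3 * k) mod 3 = 2"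
        using mod3_succ_of_1[OF eq v] .
      then have False
        using square_mod3_ne_2[OF s(2)] by simp
      then show ?thesis ..
    next
      case False
      have t4: "t + 4 \<le> 6 * k"
        using 4 False by presburger
      have c: "2 * (i - 2 - 3 * k) \<le> t" "2 * (i - 2 - 3 * k) \<le> t + 2" "t + 2 < 6 * k" "t + 2 < 6 * k + 1"
        using 4 t4 by linarith+
      have n1: "H8_succ k (i * aa k + t) = i * aa k + t + 2"
        using H8_succ_row[OF tl(1), of i] c0 c 4 assms(3) by simp
      have n2: "H8_succ k (i * aa k + t + 2) = i * aa k + t + 2 + 2"
        using H8_succ_row[OF tl(3), of i] c0 c by simp
      show ?thesis
        by (rule residues_distinct_run[OF n1 n2]) simp
    qed
  qed
qed

lemma residues_distinct_D:
  assumes "3 * k + 1 \<le> i" "i \<le> 6 * k" "t = 6 * k + 1 + u" "u \<le> 6 * k" "u \<le> 2 * (i - 3 * k) \<or> even u"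
    "k > 0" "H8_index k (i * aa k + t) mod 3 = 1"
  shows "residues_distinct k (i * aa k + t)"
proof -
  have tl: "t < aa k"
    using assms aa_def[of k] by linarith
  have c0: "\<not> i \<le> 3 * k" "i \<noteq> 0" "\<not> t < 6 * k + 1" "6 * k + 1 \<le> t" "t - (6 * k + 1) = u"
    using assms by linarith+
  have e: "\<not> E_start k \<le> i * aa k + t"
    using below_E_start_D[of i k t] assms tl by linarith
  obtain s where s: "s = i * i" "s mod 3 = (if i mod 3 = 0 then 0 else 1)" "i \<le> s"
    by (rule obtain_square)
  have ic: "H8_index k (i * aa k + t) = s + 3 * k + 1 + run_pos (2 * (i - 3 * k)) u"
    using H8_index_row[OF tl(1), of i] c0 e s(1) by simp
  have "2 * (i - 3 * k) \<le> 6 * k"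
    using assms(2) by linarith
  with assms(4,5) show ?thesis
  proof (cases rule: D_offset_cases)
    case 1
    have tl1: "t + 1 < aa k"
      using 1 assms aa_def[of k] by linarith
    have c: "\<not> 2 * (i - 3 * k) \<le> u" "\<not> 2 * (i - 3 * k) \<le> u + 1" "t + 1 - (6 * k + 1) = u + 1" "\<not> t + 1 < 6 * k + 1"
      using 1 assms by linarith+
    have n1: "H8_succ k (i * aa k + t) = i * aa k + t + 1"
      using H8_succ_row[OF tl, of i] c0 c by simp
    have n2: "H8_succ k (i * aa k + t + 1) = i * aa k + t + 1 + 1"
      using H8_succ_row[OF tl1, of i] c0 c by simp
    show ?thesis
      by (rule residues_distinct_run[OF n1 n2]) simp
  next
    case 2
    have tl1: "t + 1 < aa k"
      using 2 assms aa_def[of k] by linarith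
    have c: "\<not> 2 * (i - 3 * k) \<le> u" "\<not> u + 1 < 6 * k" "t + 1 - (6 * k + 1) = u + 1" "\<not> t + 1 < 6 * k + 1"
      using 2 assms by linarith+
    have n1: "H8_succ k (i * aa k + t) = i * aa k + t + 1"
      using H8_succ_row[OF tl, of i] c0 c by simp
    have n2: "H8_succ k (i * aa k + t + 1) = i * aa k + t + 1 + 1"
      using H8_succ_row[OF tl1, of i] c0 c by simp
    show ?thesis
      by (rule residues_distinct_run[OF n1 n2]) simp
  next
    case 3
    have v: "(s + 3 * k + 1 + u) mod 3 = 1"
      using assms(7) ic 3 by (simp add: run_pos_le)
    have "(s + 3 * k + 1 + u) + 3 * k = s + 2 * i"
      using 3 assms(1) by arith
    then have "(s + 2 * i) mod 3 = 1"
      using v by (rule mod3_add_multiple)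
    then have False
      using square_add_twice_mod3_ne_1[OF s(2)] by simp
    then show ?thesis ..
  next
    case 4
    have p: "run_pos (2 * (i - 3 * k)) (6 * k) = i"
      unfolding run_pos_def using assms by auto
    show ?thesis
    proof (cases "i = 3 * k + 1")
      case True
      have v: "(s + 3 * k + 1 + i) mod 3 = 1"
        using assms(7) ic 4 p by simp
      have "s mod 3 = 1"
        using s(2) True by presburger
      then have False
        using v True by presburger
      then show ?thesis ..
    next
      case False
      have ta: "t + 1 = aa k"
        using 4 assms aa_def[of k] by linarith
      have c: "\<not> u < 6 * k"
        using 4 by simp
      have n1: "H8_succ k (i * aa k + t) = i * aa k + t + 1"
        using H8_succ_row[OF tl, of i] c0 c 4 by simp
      have eq: "i * aa k + t + 1 = (i + 1) * aa k + 0"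
        using ta by simp
      have c2: "\<not> i + 1 \<le> 3 * k" "\<not> 2 * (i + 1 - 2 - 3 * k) \<le> 0"
        using False assms(1) by linarith+
      have nf: "H8_succ k ((i + 1) * aa k + 0) = (i + 1) * aa k + 0 + 1"
        using H8_succ_row[of 0 k "i + 1"] aa_pos c2 by simp
      have n2: "H8_succ k (i * aa k + t + 1) = i * aa k + t + 1 + 1"
        unfolding eq by (rule nf)
      show ?thesis
        by (rule residues_distinct_run[OF n1 n2]) simp
    qed
  next
    case 5
    then have "2 * ((u - 2 * (i - 3 * k)) div 2) = u - 2 * (i - 3 * k)"
      by (intro even_two_times_div_two) simp
    with 5 have ue: "u = 2 * (i - 3 * k) + 2 * ((u - 2 * (i - 3 * k)) div 2)"
      by linarith
    show ?thesis
    proof (cases "u + 2 = 6 * k")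
      case True
      have p: "run_pos (2 * (i - 3 * k)) u = 2 * (i - 3 * k) + (u - 2 * (i - 3 * k)) div 2"
        by (subst ue, rule run_pos_even)
      have v: "(s + 3 * k + 1 + (2 * (i - 3 * k) + (u - 2 * (i - 3 * k)) div 2)) mod 3 = 1"
        using assms(7) ic p by simp
      have "(s + 3 * k + 1 + (2 * (i - 3 * k) + (u - 2 * (i - 3 * k)) div 2)) + 3 * 0 = s + i + 3 * k"
        using True ue assms(1) by arith
      then have "(s + i + 3 * k) mod 3 = 1"
        using v by (rule mod3_add_multiple)
      then have "(s + i) mod 3 = 1"
        by simp
      then have False
        using square_add_mod3_ne_1[OF s(2)] by simp
      then show ?thesis ..
    next
      case False
      have u4: "u + 4 \<le> 6 * k"
        using 5 False by presburger
      have tl2: "t + 2 < aa k"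
        using u4 assms aa_def[of k] by linarith
      have c: "2 * (i - 3 * k) \<le> u" "2 * (i - 3 * k) \<le> u + 2" "u < 6 * k" "u + 2 < 6 * k" "t + 2 - (6 * k + 1) = u + 2" "\<not> t + 2 < 6 * k + 1"
        using 5 u4 assms by linarith+
      have n1: "H8_succ k (i * aa k + t) = i * aa k + t + 2"
        using H8_succ_row[OF tl, of i] c0 c by simp
      have n2: "H8_succ k (i * aa k + t + 2) = i * aa k + t + 2 + 2"
        using H8_succ_row[OF tl2, of i] c0 c by simp
      show ?thesis
        by (rule residues_distinct_run[OF n1 n2]) simp
    qed
  qed
qed

lemma residues_distinct_of_in_rows:
  assumes "in_rows k x" "0 < k" "H8_index k x mod 3 = 1"
  shows "residues_distinct k x"
  using assms(1)
proof (cases rule: in_rows_cases)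
  case E
  then show ?thesis
    by (rule residues_distinct_E)
next
  case zero
  then have "H8_index k x = 0"
    using H8_index_row[of 0 k 0] aa_pos by simp
  with assms(3) show ?thesis
    by simp
next
  case (A i j)
  with assms(3) show ?thesis
    using residues_distinct_A[of i k "2 * j" j] by simp
next
  case (B i j)
  with assms(3) show ?thesis
    using residues_distinct_B[OF _ _ refl, of i k j] by simp
next
  case (C i t)
  with assms(2,3) show ?thesis
    using residues_distinct_C[of k i t] by simp
next
  case (D i u)
  with assms(2,3) show ?thesis
    using residues_distinct_D[OF _ _ refl, of k i u] by simp
qed

section \<open>The permutation property\<close>

lemma numerical_semigroup_infinite: "numerical_semigroup G \<Longrightarrow> infinite G"
  unfolding numerical_semigroup_def using infinite_UNIV_nat by (metis Diff_infinite_finite finite_Diff2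
      finite_UnI Un_Diff_cancel2 sup_top_left)

lemma enumerate_0_numerical_semigroup: "numerical_semigroup G \<Longrightarrow> enumerate G 0 = 0"
  unfolding numerical_semigroup_def enumerate_0 by (auto intro: Least_equality)

lemma numerical_semigroup_H8:
  assumes "0 < k"
  shows "numerical_semigroup (H8 k)"
  unfolding numerical_semigroup_def
proof (intro conjI ballI)
  show "0 \<in> H8 k"
    unfolding H8_def Aset_def by simp
  show "x + y \<in> H8 k" if "x \<in> H8 k" "y \<in> H8 k" for x y
    using that G8_eq_H8[OF assms] unfolding G8_def by (metis monoid_gen.gen_add)
  have "UNIV - H8 k \<subseteq> {..<E_start k}"
    using in_rows_E mem_H8_iff_in_rows[OF assms] by (meson Diff_iff lessThan_iff not_le subsetI)
  then show "finite (UNIV - H8 k)"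
    by (rule finite_subset) simp
qed

lemma H8_successor:
  assumes "0 < k" "x \<in> H8 k"
  shows "x < H8_succ k x \<and> H8_succ k x \<in> H8 k \<and> (\<forall>z. x < z \<and> z < H8_succ k x \<longrightarrow> z \<notin> H8 k)"
    and "H8_index k (H8_succ k x) = Suc (H8_index k x)"
  using succ_step_of_in_rows[of k x] assms mem_H8_iff_in_rows[OF assms(1)]
  unfolding succ_step_def by auto

lemma enumerate_H8_Suc:
  assumes "0 < k"
  shows "enumerate (H8 k) (Suc n) = H8_succ k (enumerate (H8 k) n)"
  using numerical_semigroup_infinite[OF numerical_semigroup_H8[OF assms]] H8_successor(1)[OF assms]
  by (rule enumerate_Suc_eq_successor)

lemma H8_index_enumerate:
  assumes "0 < k"
  shows "H8_index k (enumerate (H8 k) n) = n"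
proof (rule enumerate_index)
  show "infinite (H8 k)"
    using numerical_semigroup_H8[OF assms] by (rule numerical_semigroup_infinite)
  show "H8_index k (enumerate (H8 k) 0) = 0"
    using enumerate_0_numerical_semigroup[OF numerical_semigroup_H8[OF assms]]
      H8_index_row[of 0 k 0] aa_pos by simp
qed (use enumerate_H8_Suc[OF assms] H8_successor(2)[OF assms] in auto)

lemma enumerate_H8_generators:
  assumes "0 < k"
  shows "enumerate (H8 k) ` {1..3} = {aa k, aa k + 2, aa k + aa k div 2}"
proof -
  have e0: "enumerate (H8 k) 0 = 0"
    using numerical_semigroup_H8[OF assms] by (rule enumerate_0_numerical_semigroup)
  have "H8_succ k (0 * aa k + 0) = aa k" "H8_succ k (1 * aa k + 0) = aa k + 2"
    "H8_succ k (1 * aa k + 2) = aa k + (6 * k + 1)"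
    using H8_succ_row[of 0 k 0] H8_succ_row[of 0 k 1] H8_succ_row[of 2 k 1] aa_pos assms
    by (simp_all add: aa_def)
  with e0 have "enumerate (H8 k) 1 = aa k" "enumerate (H8 k) 2 = aa k + 2"
    "enumerate (H8 k) 3 = aa k + (6 * k + 1)"
    using enumerate_H8_Suc[OF assms] by (simp_all add: numeral_eq_Suc)
  moreover have "{1..3 :: nat} = {1, 2, 3}"
    by auto
  ultimately show ?thesis
    by simp
qed

lemma perm_numerical_semigroup_H8:
  assumes "0 < k"
  shows "perm_numerical_semigroup 3 (H8 k)"
  unfolding perm_numerical_semigroup_def
proof (intro conjI allI)
  show "numerical_semigroup (H8 k)"
    using assms by (rule numerical_semigroup_H8)
  show "H8 k = monoid_gen (enumerate (H8 k) ` {1..3})"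
    using G8_eq_H8[OF assms] enumerate_H8_generators[OF assms] unfolding G8_def by simp
  fix m
  let ?x = "enumerate (H8 k) (m * 3 + 1)"
  have "?x \<in> H8 k"
    using numerical_semigroup_infinite[OF numerical_semigroup_H8[OF assms]] by (rule enumerate_in_set)
  moreover have "H8_index k ?x mod 3 = 1"
    using H8_index_enumerate[OF assms, of "m * 3 + 1"] by presburger
  ultimately have "residues_distinct k ?x"
    using residues_distinct_of_in_rows assms mem_H8_iff_in_rows[OF assms] by blast
  moreover have "enumerate (H8 k) (m * 3 + 2) = H8_succ k ?x"
    "enumerate (H8 k) (m * 3 + 3) = H8_succ k (H8_succ k ?x)"
    using enumerate_H8_Suc[OF assms] by (simp_all add: numeral_eq_Suc)
  ultimately show "bij_betw (\<lambda>j. enumerate (H8 k) (m * 3 + j) mod 3) {1..3} {..<3}"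
    unfolding residues_distinct_def by (intro bij_betw_mod3_of_distinct) simp
qed

theorem lemma4p8:
  fixes k :: nat
  assumes "k > 0"
  defines "a \<equiv> aa k"
  defines "G \<equiv> monoid_gen {a, a + 2, a + a div 2}"
  shows "(\<forall>x. x \<in> G \<longleftrightarrow> (\<exists>q r s. r \<le> q \<and> x = q * a + 2 * r + s * (a + a div 2)))
    \<and> G = H8 k
    \<and> (\<forall>i\<in>{1..3*k}. setless (Aset k i) (Bset k i))
    \<and> (\<forall>i\<in>{1..3*k-1}. setless (Bset k i) (Aset k (i + 1)))
    \<and> setless (Bset k (3*k)) (Cset k (3*k+1))
    \<and> (\<forall>i\<in>{3*k+1..6*k}. setless (Cset k i) (Dset k i))
    \<and> (\<forall>i\<in>{3*k+1..6*k}. setless (Dset k i) (Cset k (i + 1)))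
    \<and> setless (Cset k (6*k+1)) (Eset k)
    \<and> perm_numerical_semigroup 3 (H8 k)"
proof -
  have "\<forall>x. x \<in> G \<longleftrightarrow> (\<exists>q r s. r \<le> q \<and> x = q * a + 2 * r + s * (a + a div 2))"
    unfolding G_def using mem_monoid_gen_iff by blast
  moreover have "G = H8 k"
    unfolding G_def a_def using G8_eq_H8[OF assms(1)] by (simp only: G8_def)
  ultimately show ?thesis
    using H8_pieces_ordered[OF assms(1)] perm_numerical_semigroup_H8[OF assms(1)] by blast
qed

end
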